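(* Let $(\mathbf A,G,H)$ be a tense Pavelka algebra whose underlying Pavelka algebra $\mathbf A$ is semisimple. The following are equivalent: (i) $G(x)\cdot G(y)\le G(x\cdot y)$ for all $x,y\in A$; (ii) $H(x)\cdot H(y)\le H(x\cdot y)$ for all $x,y\in A$; (iii) the natural time frame of $(\mathbf A,G,H)$ is boolean, i.e. $R(F,F')=\bigwedge_{a\in A}(G(a)/F'\rightarrow a/F)\in\{0,1\}$ for all $F,F'\in\mathrm{Spec_M}\mathbf A$; (iv) $G$ and $H$ are tense operators on the MV-reduct $(A;\oplus,\neg,\mathbf 0)$ in the sense of tense MV-algebras, i.e. for all $x,y\in A$: (T1) $G(1)=H(1)=1$; (T2) $G(x)\cdot G(y)\le G(x\cdot y)$, $H(x)\cdot H(y)\le H(x\cdot y)$; (T3) $G(x)\oplus G(y)\le G(x\oplus y)$, $H(x)\oplus H(y)\le H(x\oplus y)$; (T4) $G(x)\cdot G(x)=G(x\cdot x)$, $H(x)\cdot H(x)=H(x\cdot x)$; (T5) $G(x)\oplus G(x)=G(x\oplus x)$, $H(x)\oplus H(x)=H(x\oplus x)$; (T6) $\neg G(\neg H(x))\le x$, $\neg H(\neg G(x))\le x$.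
   Context: An MV-algebra $(A;\oplus,\neg,0)$ carries derived operations $1=\neg0$, $x\cdot y=\neg(\neg x\oplus\neg y)$, $x\rightarrow y=\neg x\oplus y$, $x\vee y=\neg(\neg x\oplus y)\oplus y$, $x\wedge y=\neg(\neg x\vee\neg y)$, order $x\le y$ iff $\neg x\oplus y=1$. The standard MV-algebra is $[0,1]$ with $x\oplus y=\min\{x+y,1\}$, $\neg x=1-x$. A Pavelka algebra is $\mathbf A=(A;\oplus,\neg,\{\mathbf r\mid r\in[0,1]\cap\mathbb Q\})$ with $(A;\oplus,\neg,\mathbf 0)$ an MV-algebra, $\mathbf r\oplus\mathbf s=\mathbf t$ whenever $\min\{r+s,1\}=t$, $\neg\mathbf r=\mathbf s$ whenever $1-r=s$. Filters are filters of the MV-reduct; $\mathrm{Spec_M}\mathbf A$ is the set of maximal proper filters; for $F\in\mathrm{Spec_M}\mathbf A$, $\mathbf A/F$ embeds uniquely into $[0,1]$ and $x/F$ is identified with its image in $[0,1]$. Semisimple: MV-reduct is a subdirect product of simple MV-algebras. A tense Pavelka algebra is $(\mathbf A,G,H)$ with $G,H\colon A\to A$ such that for all $x,y$ and constants $\mathbf r$: (PT1) $G(x\wedge y)=G(x)\wedge G(y)$, $H(x\wedge y)=H(x)\wedge H(y)$; (PT2) $\mathbf r\rightarrow G(x)=G(\mathbf r\rightarrow x)$, $\mathbf r\rightarrow H(x)=H(\mathbf r\rightarrow x)$; (PT3) $\neg H(\neg G(x))\le x$, $\neg G(\neg H(x))\le x$. *)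

theory Defs
  imports Complex_Main
begin

section \<open>MV-algebras given by a carrier A and operations ad (oplus), ng (neg), z (zero)\<close>

definition mv_one :: "('a \<Rightarrow> 'a) \<Rightarrow> 'a \<Rightarrow> 'a" where
  "mv_one ng z = ng z"

definition mv_mult :: "('a \<Rightarrow> 'a \<Rightarrow> 'a) \<Rightarrow> ('a \<Rightarrow> 'a) \<Rightarrow> 'a \<Rightarrow> 'a \<Rightarrow> 'a" where
  "mv_mult ad ng x y = ng (ad (ng x) (ng y))"

definition mv_imp :: "('a \<Rightarrow> 'a \<Rightarrow> 'a) \<Rightarrow> ('a \<Rightarrow> 'a) \<Rightarrow> 'a \<Rightarrow> 'a \<Rightarrow> 'a" where
  "mv_imp ad ng x y = ad (ng x) y"

definition mv_join :: "('a \<Rightarrow> 'a \<Rightarrow> 'a) \<Rightarrow> ('a \<Rightarrow> 'a) \<Rightarrow> 'a \<Rightarrow> 'a \<Rightarrow> 'a" where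
  "mv_join ad ng x y = ad (ng (ad (ng x) y)) y"

definition mv_meet :: "('a \<Rightarrow> 'a \<Rightarrow> 'a) \<Rightarrow> ('a \<Rightarrow> 'a) \<Rightarrow> 'a \<Rightarrow> 'a \<Rightarrow> 'a" where
  "mv_meet ad ng x y = ng (mv_join ad ng (ng x) (ng y))"

definition mv_le :: "('a \<Rightarrow> 'a \<Rightarrow> 'a) \<Rightarrow> ('a \<Rightarrow> 'a) \<Rightarrow> 'a \<Rightarrow> 'a \<Rightarrow> 'a \<Rightarrow> bool" where
  "mv_le ad ng z x y \<longleftrightarrow> ad (ng x) y = mv_one ng z"

definition mv_algebra :: "'a set \<Rightarrow> ('a \<Rightarrow> 'a \<Rightarrow> 'a) \<Rightarrow> ('a \<Rightarrow> 'a) \<Rightarrow> 'a \<Rightarrow> bool" where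
  "mv_algebra A ad ng z \<longleftrightarrow>
     z \<in> A \<and> (\<forall>x\<in>A. \<forall>y\<in>A. ad x y \<in> A) \<and> (\<forall>x\<in>A. ng x \<in> A) \<and>
     (\<forall>x\<in>A. \<forall>y\<in>A. \<forall>w\<in>A. ad x (ad y w) = ad (ad x y) w) \<and>
     (\<forall>x\<in>A. \<forall>y\<in>A. ad x y = ad y x) \<and>
     (\<forall>x\<in>A. ad x z = x) \<and>
     (\<forall>x\<in>A. ng (ng x) = x) \<and>
     (\<forall>x\<in>A. ad x (ng z) = ng z) \<and>
     (\<forall>x\<in>A. \<forall>y\<in>A. ad (ng (ad (ng x) y)) y = ad (ng (ad (ng y) x)) x)"

definition mv_filter :: "'a set \<Rightarrow> ('a \<Rightarrow> 'a \<Rightarrow> 'a) \<Rightarrow> ('a \<Rightarrow> 'a) \<Rightarrow> 'a \<Rightarrow> 'a set \<Rightarrow> bool" where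
  "mv_filter A ad ng z F \<longleftrightarrow>
     F \<subseteq> A \<and> mv_one ng z \<in> F \<and>
     (\<forall>x\<in>F. \<forall>y\<in>F. mv_mult ad ng x y \<in> F) \<and>
     (\<forall>x\<in>F. \<forall>y\<in>A. mv_le ad ng z x y \<longrightarrow> y \<in> F)"

definition max_filters :: "'a set \<Rightarrow> ('a \<Rightarrow> 'a \<Rightarrow> 'a) \<Rightarrow> ('a \<Rightarrow> 'a) \<Rightarrow> 'a \<Rightarrow> 'a set set" where
  "max_filters A ad ng z =
     {F. mv_filter A ad ng z F \<and> F \<noteq> A \<and>
         (\<forall>F'. mv_filter A ad ng z F' \<and> F \<subseteq> F' \<and> F' \<noteq> A \<longrightarrow> F' = F)}"

text \<open>Semisimple: the radical (intersection of all maximal filters) is trivial,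
  equivalently the MV-algebra is a subdirect product of simple MV-algebras.\<close>
definition mv_semisimple :: "'a set \<Rightarrow> ('a \<Rightarrow> 'a \<Rightarrow> 'a) \<Rightarrow> ('a \<Rightarrow> 'a) \<Rightarrow> 'a \<Rightarrow> bool" where
  "mv_semisimple A ad ng z \<longleftrightarrow>
     {x\<in>A. \<forall>F\<in>max_filters A ad ng z. x \<in> F} = {mv_one ng z}"

definition mv_hom_unit :: "'a set \<Rightarrow> ('a \<Rightarrow> 'a \<Rightarrow> 'a) \<Rightarrow> ('a \<Rightarrow> 'a) \<Rightarrow> 'a \<Rightarrow> ('a \<Rightarrow> real) \<Rightarrow> bool" where
  "mv_hom_unit A ad ng z h \<longleftrightarrow>
     (\<forall>x\<in>A. 0 \<le> h x \<and> h x \<le> 1) \<and>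
     (\<forall>x\<in>A. \<forall>y\<in>A. h (ad x y) = min (h x + h y) 1) \<and>
     (\<forall>x\<in>A. h (ng x) = 1 - h x) \<and> h z = 0 \<and>
     (\<forall>x. x \<notin> A \<longrightarrow> h x = 0)"

text \<open>x/F for a maximal filter F, identified with its image in [0,1]: the value of the
  unique homomorphism A \<rightarrow> [0,1] whose filter (preimage of 1) is F; it factors through
  the unique embedding A/F \<rightarrow> [0,1].\<close>
definition quot_val :: "'a set \<Rightarrow> ('a \<Rightarrow> 'a \<Rightarrow> 'a) \<Rightarrow> ('a \<Rightarrow> 'a) \<Rightarrow> 'a \<Rightarrow> 'a set \<Rightarrow> 'a \<Rightarrow> real" where
  "quot_val A ad ng z F x =
     (THE h. mv_hom_unit A ad ng z h \<and> (\<forall>y\<in>A. h y = 1 \<longleftrightarrow> y \<in> F)) x"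

definition luk_imp :: "real \<Rightarrow> real \<Rightarrow> real" where
  "luk_imp a b = min 1 (1 - a + b)"

section \<open>Pavelka algebras; constants r \<in> [0,1] \<inter> Q given by c r, with bold 0 = c 0\<close>

definition pavelka_algebra :: "'a set \<Rightarrow> ('a \<Rightarrow> 'a \<Rightarrow> 'a) \<Rightarrow> ('a \<Rightarrow> 'a) \<Rightarrow> (rat \<Rightarrow> 'a) \<Rightarrow> bool" where
  "pavelka_algebra A ad ng c \<longleftrightarrow>
     mv_algebra A ad ng (c 0) \<and>
     (\<forall>r. 0 \<le> r \<and> r \<le> 1 \<longrightarrow> c r \<in> A) \<and>
     (\<forall>r s. 0 \<le> r \<and> r \<le> 1 \<and> 0 \<le> s \<and> s \<le> 1 \<longrightarrow> ad (c r) (c s) = c (min (r + s) 1)) \<and>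
     (\<forall>r. 0 \<le> r \<and> r \<le> 1 \<longrightarrow> ng (c r) = c (1 - r))"

definition tense_pavelka :: "'a set \<Rightarrow> ('a \<Rightarrow> 'a \<Rightarrow> 'a) \<Rightarrow> ('a \<Rightarrow> 'a) \<Rightarrow> (rat \<Rightarrow> 'a)
    \<Rightarrow> ('a \<Rightarrow> 'a) \<Rightarrow> ('a \<Rightarrow> 'a) \<Rightarrow> bool" where
  "tense_pavelka A ad ng c G H \<longleftrightarrow>
     pavelka_algebra A ad ng c \<and>
     (\<forall>x\<in>A. G x \<in> A) \<and> (\<forall>x\<in>A. H x \<in> A) \<and>
     (\<forall>x\<in>A. \<forall>y\<in>A. G (mv_meet ad ng x y) = mv_meet ad ng (G x) (G y) \<and>
                    H (mv_meet ad ng x y) = mv_meet ad ng (H x) (H y)) \<and>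
     (\<forall>r x. 0 \<le> r \<and> r \<le> 1 \<and> x \<in> A \<longrightarrow>
            mv_imp ad ng (c r) (G x) = G (mv_imp ad ng (c r) x) \<and>
            mv_imp ad ng (c r) (H x) = H (mv_imp ad ng (c r) x)) \<and>
     (\<forall>x\<in>A. mv_le ad ng (c 0) (ng (H (ng (G x)))) x \<and>
            mv_le ad ng (c 0) (ng (G (ng (H x)))) x)"

definition time_rel :: "'a set \<Rightarrow> ('a \<Rightarrow> 'a \<Rightarrow> 'a) \<Rightarrow> ('a \<Rightarrow> 'a) \<Rightarrow> 'a \<Rightarrow> ('a \<Rightarrow> 'a)
    \<Rightarrow> 'a set \<Rightarrow> 'a set \<Rightarrow> real" where
  "time_rel A ad ng z G F F' =
     (INF a\<in>A. luk_imp (quot_val A ad ng z F' (G a)) (quot_val A ad ng z F a))"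

end

(*
  Evaluation at maximal filters embeds a semisimple Pavelka algebra into a power of [0,1]:
  the value a/F is the supremum of the rationals r with r -> a in F, and it is the unique
  homomorphism into [0,1] with kernel F.  In these coordinates G(b)/F' is the infimum over F
  of R(F,F') -> b/F, R being the natural time frame.  The inequality >= is the heart of the
  matter: otherwise a finite grid of rationals produces an a with G(a) in F' and q * a <= b
  (checked pointwise, hence in A by semisimplicity) for a rational q above G(b)/F'.

  If (i) holds and 0 < R(F,F') < 1, pick a nearly attaining the infimum defining R(F,F') and
  x = r -> a with r just below G(a)/F'.  Then x/F is about R(F,F'), while G(x) lies in F', so
  G(x * x) lies in F' by (i) and R(F,F') <= (x * x)/F, which is about 2 R(F,F') - 1: impossible.
  Conversely, if R only takes the values 0 and 1, then G(b)/F' is the infimum of b/F over the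
  successors F of F'; such infima commute with x * x and x (+) x and satisfy the inequalities of
  (iv) pointwise.  Finally R_G(F,F') = R_H(F',F) by (PT3), so (iii) is symmetric in G and H.
*)
theory Submission
  imports Defs
begin

section \<open>MV-algebras\<close>

locale mv =
  fixes A :: "'a set" and ad :: "'a \<Rightarrow> 'a \<Rightarrow> 'a" and ng :: "'a \<Rightarrow> 'a" and z :: 'a
  assumes mv: "mv_algebra A ad ng z"
begin

abbreviation one where "one \<equiv> ng z"
abbreviation mul where "mul \<equiv> mv_mult ad ng"
abbreviation imp where "imp \<equiv> mv_imp ad ng"
abbreviation le where "le \<equiv> mv_le ad ng z"
abbreviation join where "join \<equiv> mv_join ad ng"
abbreviation meet where "meet \<equiv> mv_meet ad ng"

lemma z_in [simp]: "z \<in> A"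
  using mv unfolding mv_algebra_def by blast
lemma ad_in [simp]: "x \<in> A \<Longrightarrow> y \<in> A \<Longrightarrow> ad x y \<in> A"
  using mv unfolding mv_algebra_def by blast
lemma ng_in [simp]: "x \<in> A \<Longrightarrow> ng x \<in> A"
  using mv unfolding mv_algebra_def by blast
lemma ad_assoc: "x \<in> A \<Longrightarrow> y \<in> A \<Longrightarrow> w \<in> A \<Longrightarrow> ad (ad x y) w = ad x (ad y w)"
  using mv unfolding mv_algebra_def by metis
lemma ad_commute: "x \<in> A \<Longrightarrow> y \<in> A \<Longrightarrow> ad x y = ad y x"
  using mv unfolding mv_algebra_def by blast
lemma ad_z [simp]: "x \<in> A \<Longrightarrow> ad x z = x"
  using mv unfolding mv_algebra_def by blast
lemma ng_ng [simp]: "x \<in> A \<Longrightarrow> ng (ng x) = x"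
  using mv unfolding mv_algebra_def by blast
lemma ad_one [simp]: "x \<in> A \<Longrightarrow> ad x one = one"
  using mv unfolding mv_algebra_def by blast
lemma lukasiewicz: "x \<in> A \<Longrightarrow> y \<in> A \<Longrightarrow> ad (ng (ad (ng x) y)) y = ad (ng (ad (ng y) x)) x"
  using mv unfolding mv_algebra_def by blast

lemma z_ad [simp]: "x \<in> A \<Longrightarrow> ad z x = x" using ad_commute by force
lemma one_ad [simp]: "x \<in> A \<Longrightarrow> ad one x = one" using ad_commute by force
lemma ng_ad_self [simp]: "x \<in> A \<Longrightarrow> ad (ng x) x = one"
  using lukasiewicz[of one x] by simp

lemma mul_def': "mul x y = ng (ad (ng x) (ng y))" by (simp add: mv_mult_def)
lemma imp_def': "imp x y = ad (ng x) y" by (simp add: mv_imp_def)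
lemma le_def': "le x y \<longleftrightarrow> ad (ng x) y = one" by (simp add: mv_le_def mv_one_def)
lemma join_def': "join x y = ad (ng (ad (ng x) y)) y" by (simp add: mv_join_def)
lemma meet_def': "meet x y = ng (join (ng x) (ng y))" by (simp add: mv_meet_def)

lemma mul_in [simp]: "x \<in> A \<Longrightarrow> y \<in> A \<Longrightarrow> mul x y \<in> A" by (simp add: mul_def')
lemma imp_in [simp]: "x \<in> A \<Longrightarrow> y \<in> A \<Longrightarrow> imp x y \<in> A" by (simp add: imp_def')
lemma join_in [simp]: "x \<in> A \<Longrightarrow> y \<in> A \<Longrightarrow> join x y \<in> A" by (simp add: join_def')
lemma meet_in [simp]: "x \<in> A \<Longrightarrow> y \<in> A \<Longrightarrow> meet x y \<in> A" by (simp add: meet_def')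

lemma le_refl [simp]: "x \<in> A \<Longrightarrow> le x x" by (simp add: le_def')
lemma le_antisym: "x \<in> A \<Longrightarrow> y \<in> A \<Longrightarrow> le x y \<Longrightarrow> le y x \<Longrightarrow> x = y"
  using lukasiewicz[of x y] by (simp add: le_def')
lemma le_iff_ex_ad: "x \<in> A \<Longrightarrow> y \<in> A \<Longrightarrow> le x y \<longleftrightarrow> (\<exists>w\<in>A. y = ad x w)"
proof
  assume "x \<in> A" "y \<in> A" "le x y"
  then have "y = ad (ng (ad (ng y) x)) x" using lukasiewicz[of x y] by (simp add: le_def')
  then show "\<exists>w\<in>A. y = ad x w" using \<open>x \<in> A\<close> \<open>y \<in> A\<close> by (metis ad_commute ad_in ng_in)
next
  assume "x \<in> A" "y \<in> A" "\<exists>w\<in>A. y = ad x w"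
  then show "le x y" by (auto simp: le_def' ad_assoc[symmetric])
qed
lemma le_trans: "x \<in> A \<Longrightarrow> y \<in> A \<Longrightarrow> w \<in> A \<Longrightarrow> le x y \<Longrightarrow> le y w \<Longrightarrow> le x w"
proof -
  assume a: "x \<in> A" "y \<in> A" "w \<in> A" "le x y" "le y w"
  then obtain u v where "u \<in> A" "y = ad x u" "v \<in> A" "w = ad y v" using le_iff_ex_ad by blast
  then show ?thesis using a le_iff_ex_ad by (auto simp: ad_assoc)
qed
lemma le_z [simp]: "x \<in> A \<Longrightarrow> le z x" by (simp add: le_def')
lemma le_one [simp]: "x \<in> A \<Longrightarrow> le x one" by (simp add: le_def')
lemma ad_upper2: "x \<in> A \<Longrightarrow> y \<in> A \<Longrightarrow> le y (ad x y)" using le_iff_ex_ad ad_commute by auto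
lemma ad_mono_left: "x \<in> A \<Longrightarrow> y \<in> A \<Longrightarrow> w \<in> A \<Longrightarrow> le x y \<Longrightarrow> le (ad x w) (ad y w)"
proof -
  assume a: "x \<in> A" "y \<in> A" "w \<in> A" "le x y"
  then obtain u where u: "u \<in> A" "y = ad x u" using le_iff_ex_ad by blast
  then have "ad y w = ad (ad x w) u" using a by (simp add: ad_assoc ad_commute[of u w])
  then show ?thesis using a u le_iff_ex_ad by auto
qed
lemma ng_antimono: "x \<in> A \<Longrightarrow> y \<in> A \<Longrightarrow> le x y \<Longrightarrow> le (ng y) (ng x)"
  by (simp add: le_def' ad_commute)
lemma ng_le_ng_iff: "x \<in> A \<Longrightarrow> y \<in> A \<Longrightarrow> le (ng y) (ng x) \<longleftrightarrow> le x y"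
  by (metis ng_antimono ng_in ng_ng)

lemma mul_commute: "x \<in> A \<Longrightarrow> y \<in> A \<Longrightarrow> mul x y = mul y x"
  by (simp add: mul_def' ad_commute)
lemma mul_assoc: "x \<in> A \<Longrightarrow> y \<in> A \<Longrightarrow> w \<in> A \<Longrightarrow> mul (mul x y) w = mul x (mul y w)"
  by (simp add: mul_def' ad_assoc)
lemma mul_left_commute: "x \<in> A \<Longrightarrow> y \<in> A \<Longrightarrow> w \<in> A \<Longrightarrow> mul x (mul y w) = mul y (mul x w)"
  by (simp add: mul_assoc[symmetric] mul_commute[of x y])
lemma mul_one [simp]: "x \<in> A \<Longrightarrow> mul x one = x" by (simp add: mul_def')
lemma one_mul [simp]: "x \<in> A \<Longrightarrow> mul one x = x" by (simp add: mul_def')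
lemma mul_ng_self [simp]: "x \<in> A \<Longrightarrow> mul x (ng x) = z" by (simp add: mul_def')
lemma ng_mul: "x \<in> A \<Longrightarrow> y \<in> A \<Longrightarrow> ng (mul x y) = ad (ng x) (ng y)" by (simp add: mul_def')
lemma ng_ad: "x \<in> A \<Longrightarrow> y \<in> A \<Longrightarrow> ng (ad x y) = mul (ng x) (ng y)" by (simp add: mul_def')
lemma mul_mono_left: "x \<in> A \<Longrightarrow> y \<in> A \<Longrightarrow> w \<in> A \<Longrightarrow> le x y \<Longrightarrow> le (mul x w) (mul y w)"
  by (simp add: mul_def' ng_le_ng_iff ad_mono_left ng_antimono)
lemma mul_mono_right: "x \<in> A \<Longrightarrow> y \<in> A \<Longrightarrow> w \<in> A \<Longrightarrow> le y w \<Longrightarrow> le (mul x y) (mul x w)"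
  using mul_mono_left[of y w x] mul_commute[of x y] mul_commute[of x w] by simp
lemma mul_mono:
  "x \<in> A \<Longrightarrow> y \<in> A \<Longrightarrow> x' \<in> A \<Longrightarrow> y' \<in> A \<Longrightarrow> le x y \<Longrightarrow> le x' y' \<Longrightarrow> le (mul x x') (mul y y')"
  by (metis mul_commute mul_in mul_mono_left le_trans)
lemma mul_lower1: "x \<in> A \<Longrightarrow> y \<in> A \<Longrightarrow> le (mul x y) x"
  using mul_mono_left[of y one x] by (simp add: mul_commute)
lemma mul_lower2: "x \<in> A \<Longrightarrow> y \<in> A \<Longrightarrow> le (mul x y) y"
  using mul_lower1 mul_commute by metis

lemma residuation: "x \<in> A \<Longrightarrow> y \<in> A \<Longrightarrow> w \<in> A \<Longrightarrow> le (mul x y) w \<longleftrightarrow> le x (imp y w)"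
  by (simp add: le_def' mul_def' imp_def' ad_assoc)
lemma le_iff_imp_eq_one: "x \<in> A \<Longrightarrow> y \<in> A \<Longrightarrow> le x y \<longleftrightarrow> imp x y = one"
  by (simp add: le_def' imp_def')
lemma le_iff_mul_ng_eq_z: "x \<in> A \<Longrightarrow> y \<in> A \<Longrightarrow> le x y \<longleftrightarrow> mul x (ng y) = z"
  using ng_ng[of "ad (ng x) y"] by (auto simp: le_def' mul_def')
lemma mul_imp_le: "x \<in> A \<Longrightarrow> y \<in> A \<Longrightarrow> le (mul x (imp x y)) y"
  using residuation[of "imp x y" x y] mul_commute[of x "imp x y"] by simp
lemma imp_contrapos: "x \<in> A \<Longrightarrow> y \<in> A \<Longrightarrow> imp (ng y) (ng x) = imp x y"
  by (simp add: imp_def' ad_commute)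
lemma imp_mono_right: "x \<in> A \<Longrightarrow> y \<in> A \<Longrightarrow> w \<in> A \<Longrightarrow> le y w \<Longrightarrow> le (imp x y) (imp x w)"
  by (simp add: imp_def' ad_commute ad_mono_left)
lemma imp_trans: "x \<in> A \<Longrightarrow> y \<in> A \<Longrightarrow> w \<in> A \<Longrightarrow> le (mul (imp x y) (imp y w)) (imp x w)"
proof -
  assume a: "x \<in> A" "y \<in> A" "w \<in> A"
  have "le (mul x (mul (imp x y) (imp y w))) (mul y (imp y w))"
    using a mul_imp_le[of x y] mul_mono_left[of "mul x (imp x y)" y "imp y w"] by (simp add: mul_assoc)
  then have "le (mul x (mul (imp x y) (imp y w))) w"
    using a mul_imp_le[of y w] le_trans by (meson imp_in mul_in)
  then have "le (mul (mul (imp x y) (imp y w)) x) w" using a by (simp add: mul_commute)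
  then show ?thesis using a residuation by simp
qed
lemma imp_one_left [simp]: "x \<in> A \<Longrightarrow> imp one x = x" by (simp add: imp_def')
lemma imp_z_left [simp]: "x \<in> A \<Longrightarrow> imp z x = one" by (simp add: imp_def')
lemma imp_z_right [simp]: "x \<in> A \<Longrightarrow> imp x z = ng x" by (simp add: imp_def')
lemma imp_mul_imp_imp_le: "x \<in> A \<Longrightarrow> y \<in> A \<Longrightarrow> u \<in> A \<Longrightarrow> w \<in> A \<Longrightarrow>
  le (mul (imp y u) (imp (imp x u) w)) (imp (imp x y) w)"
proof -
  assume a: "x \<in> A" "y \<in> A" "u \<in> A" "w \<in> A"
  have "le (mul (imp y u) (imp x y)) (imp x u)"
    using a imp_trans[of x y u] mul_commute[of "imp x y" "imp y u"] by simp
  then have "le (imp y u) (imp (imp x y) (imp x u))" using a residuation by simp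
  then have "le (mul (imp y u) (imp (imp x u) w)) (mul (imp (imp x y) (imp x u)) (imp (imp x u) w))"
    using a by (simp add: mul_mono_left)
  moreover have "le (mul (imp (imp x y) (imp x u)) (imp (imp x u) w)) (imp (imp x y) w)"
    using a by (simp add: imp_trans)
  ultimately show ?thesis
    using a le_trans[of _ "mul (imp (imp x y) (imp x u)) (imp (imp x u) w)"] by simp
qed
lemma imp_mul_imp_le_imp_mul: "x \<in> A \<Longrightarrow> y \<in> A \<Longrightarrow> u \<in> A \<Longrightarrow> v \<in> A \<Longrightarrow>
  le (mul (imp x y) (imp u v)) (imp (mul x u) (mul y v))"
proof -
  assume a: "x \<in> A" "y \<in> A" "u \<in> A" "v \<in> A"
  have "mul (mul (imp x y) (imp u v)) (mul x u) = mul (mul x (imp x y)) (mul u (imp u v))"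
    using a by (simp add: mul_assoc mul_left_commute mul_commute)
  moreover have "le (mul (mul x (imp x y)) (mul u (imp u v))) (mul y v)"
    using a by (simp add: mul_imp_le mul_mono)
  ultimately show ?thesis using a residuation[of "mul (imp x y) (imp u v)" "mul x u" "mul y v"] by simp
qed
lemma imp_mul_imp_le_imp_ad: "x \<in> A \<Longrightarrow> y \<in> A \<Longrightarrow> u \<in> A \<Longrightarrow> v \<in> A \<Longrightarrow>
  le (mul (imp x y) (imp u v)) (imp (ad x u) (ad y v))"
  using imp_mul_imp_le_imp_mul[of "ng y" "ng x" "ng v" "ng u"]
  by (simp add: imp_contrapos ng_ad[symmetric])

lemma join_alt: "x \<in> A \<Longrightarrow> y \<in> A \<Longrightarrow> join x y = ad (mul x (ng y)) y"
  by (simp add: join_def' mul_def')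
lemma join_commute: "x \<in> A \<Longrightarrow> y \<in> A \<Longrightarrow> join x y = join y x"
  using lukasiewicz by (simp add: join_def')
lemma join_upper2: "x \<in> A \<Longrightarrow> y \<in> A \<Longrightarrow> le y (join x y)"
  by (simp add: join_def' ad_upper2)
lemma join_upper1: "x \<in> A \<Longrightarrow> y \<in> A \<Longrightarrow> le x (join x y)"
  using join_upper2 join_commute by metis
lemma join_absorb2: "x \<in> A \<Longrightarrow> y \<in> A \<Longrightarrow> le x y \<Longrightarrow> join x y = y"
  by (simp add: join_def' le_def')
lemma join_absorb1: "x \<in> A \<Longrightarrow> y \<in> A \<Longrightarrow> le y x \<Longrightarrow> join x y = x"
  using join_absorb2 join_commute by metis
lemma join_least: "x \<in> A \<Longrightarrow> y \<in> A \<Longrightarrow> w \<in> A \<Longrightarrow> le x w \<Longrightarrow> le y w \<Longrightarrow> le (join x y) w"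
  using ad_mono_left[of "mul x (ng y)" "mul w (ng y)" y] mul_mono_left[of x w "ng y"]
    join_alt[of w y] join_absorb1[of w y] by (simp add: join_alt)
lemma join_le_ad: "x \<in> A \<Longrightarrow> y \<in> A \<Longrightarrow> le (join x y) (ad x y)"
  using join_alt[of x y] ad_mono_left[of "mul x (ng y)" x y] mul_lower1 by simp
lemma meet_alt: "x \<in> A \<Longrightarrow> y \<in> A \<Longrightarrow> meet x y = mul (ad x (ng y)) y"
  by (simp add: meet_def' join_def' mul_def')
lemma ng_meet: "x \<in> A \<Longrightarrow> y \<in> A \<Longrightarrow> ng (meet x y) = join (ng x) (ng y)"
  by (simp add: meet_def')
lemma meet_lower1: "x \<in> A \<Longrightarrow> y \<in> A \<Longrightarrow> le (meet x y) x"
  using join_upper1[of "ng x" "ng y"] ng_le_ng_iff[of "meet x y" x] by (simp add: ng_meet)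
lemma meet_lower2: "x \<in> A \<Longrightarrow> y \<in> A \<Longrightarrow> le (meet x y) y"
  using join_upper2[of "ng x" "ng y"] ng_le_ng_iff[of "meet x y" y] by (simp add: ng_meet)
lemma meet_greatest: "x \<in> A \<Longrightarrow> y \<in> A \<Longrightarrow> w \<in> A \<Longrightarrow> le w x \<Longrightarrow> le w y \<Longrightarrow> le w (meet x y)"
  using join_least[of "ng x" "ng y" "ng w"] ng_antimono ng_le_ng_iff[of w "meet x y"]
  by (simp add: ng_meet)
lemma meet_absorb1: "x \<in> A \<Longrightarrow> y \<in> A \<Longrightarrow> le x y \<Longrightarrow> meet x y = x"
  by (meson le_antisym le_refl meet_greatest meet_in meet_lower1)

lemma mul_join: "x \<in> A \<Longrightarrow> y \<in> A \<Longrightarrow> w \<in> A \<Longrightarrow> mul x (join y w) = join (mul x y) (mul x w)"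
proof -
  assume a: "x \<in> A" "y \<in> A" "w \<in> A"
  define j where "j = join (mul x y) (mul x w)"
  have j: "j \<in> A" using a by (simp add: j_def)
  have "le (mul y x) j" "le (mul w x) j"
    using a by (simp_all add: j_def join_upper1 join_upper2 mul_commute)
  then have "le y (imp x j)" "le w (imp x j)" using a j residuation by simp_all
  then have "le (mul x (join y w)) j"
    using a j join_least residuation[of "join y w" x j] mul_commute[of x "join y w"] by simp
  moreover have "le j (mul x (join y w))"
    using a by (simp add: j_def join_least join_upper1 join_upper2 mul_mono_right)
  ultimately show ?thesis using a j by (simp add: j_def le_antisym)
qed

lemma mul_ng_meet: "x \<in> A \<Longrightarrow> y \<in> A \<Longrightarrow> mul x (ng (meet x y)) = mul x (ng y)"
  by (simp add: ng_meet mul_join join_absorb2)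

lemma meet_mul_ng_eq_z: "x \<in> A \<Longrightarrow> y \<in> A \<Longrightarrow> meet (mul x (ng y)) (mul y (ng x)) = z"
proof -
  assume a: "x \<in> A" "y \<in> A"
  define m where "m = meet x y"
  have m: "m \<in> A" "le m x" "le m y" using a by (auto simp: m_def meet_lower1 meet_lower2)
  have cancel: "ad (mul v (ng m)) m = v" if "v \<in> A" "le m v" for v
    using that m join_alt[of v m] join_absorb1[of v m] by simp
  have "mul y (ng x) = mul y (ng m)"
    using a mul_ng_meet[of y x] by (simp add: m_def meet_def' join_commute)
  moreover have "mul x (ng y) = mul x (ng m)" using a mul_ng_meet by (simp add: m_def)
  moreover define t where "t = meet (mul x (ng m)) (mul y (ng m))"
  ultimately have eq: "meet (mul x (ng y)) (mul y (ng x)) = t" by simp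
  have t: "t \<in> A" "le t (mul x (ng m))" "le t (mul y (ng m))"
    using a m by (simp_all add: t_def meet_lower1 meet_lower2)
  have "le (ad t m) v" if "v \<in> A" "le m v" "le t (mul v (ng m))" for v
    using that t m cancel ad_mono_left[of t "mul v (ng m)" m] by simp
  then have "le (ad t m) m" using a m t by (simp add: m_def meet_greatest)
  then have tm: "ad t m = m" using le_antisym m t ad_upper2 by simp
  have "le t (ng m)" using a m t le_trans mul_lower2 by (meson mul_in ng_in)
  then have "t = meet t (ng m)" using m t by (simp add: meet_absorb1)
  also have "\<dots> = z" using m t tm by (simp add: meet_alt)
  finally show ?thesis using eq by simp
qed

lemma prelinearity: "x \<in> A \<Longrightarrow> y \<in> A \<Longrightarrow> join (imp x y) (imp y x) = one"
  using meet_mul_ng_eq_z[of x y] ng_ng[of "join (imp x y) (imp y x)"]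
  by (simp add: meet_def' imp_def' mul_def')

primrec mpow :: "'a \<Rightarrow> nat \<Rightarrow> 'a" where
  "mpow x 0 = one" | "mpow x (Suc n) = mul x (mpow x n)"

lemma mpow_in [simp]: "x \<in> A \<Longrightarrow> mpow x n \<in> A" by (induction n) auto
lemma mpow_add: "x \<in> A \<Longrightarrow> mpow x (m + n) = mul (mpow x m) (mpow x n)"
  by (induction m) (auto simp: mul_assoc)
lemma mpow_mul: "x \<in> A \<Longrightarrow> y \<in> A \<Longrightarrow> mpow (mul x y) n = mul (mpow x n) (mpow y n)"
  by (induction n) (auto simp: mul_assoc mul_left_commute)
lemma mpow_mono: "x \<in> A \<Longrightarrow> y \<in> A \<Longrightarrow> le x y \<Longrightarrow> le (mpow x n) (mpow y n)"
  by (induction n) (auto simp: mul_mono)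
lemma mpow_imp_le: "x \<in> A \<Longrightarrow> y \<in> A \<Longrightarrow> le (mpow (imp x y) n) (imp (mpow x n) (mpow y n))"
proof (induction n)
  case (Suc n)
  then have "le (mpow (imp x y) (Suc n)) (mul (imp x y) (imp (mpow x n) (mpow y n)))"
    by (simp add: mul_mono_right)
  moreover have "le (mul (imp x y) (imp (mpow x n) (mpow y n))) (imp (mpow x (Suc n)) (mpow y (Suc n)))"
    using Suc.prems by (simp add: imp_mul_imp_le_imp_mul)
  ultimately show ?case
    using Suc.prems le_trans[of "mpow (imp x y) (Suc n)" "mul (imp x y) (imp (mpow x n) (mpow y n))"]
    by (simp del: mpow.simps)
qed simp

lemma join_mpow_eq_one: "x \<in> A \<Longrightarrow> y \<in> A \<Longrightarrow> join x y = one \<Longrightarrow> join (mpow x n) y = one"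
proof (induction n)
  case 0 then show ?case by (simp add: join_absorb1)
next
  case (Suc n)
  let ?J = "join (mpow x (Suc n)) y"
  have J: "?J \<in> A" using Suc.prems by simp
  have "one = mul (join x y) (join (mpow x n) y)" using Suc by simp
  also have "\<dots> = join (mul x (join (mpow x n) y)) (mul y (join (mpow x n) y))"
    using Suc.prems mul_join[of "join (mpow x n) y" x y] mul_commute by simp
  also have "mul x (join (mpow x n) y) = join (mpow x (Suc n)) (mul x y)"
    using Suc.prems by (simp add: mul_join)
  finally have "one = join (join (mpow x (Suc n)) (mul x y)) (mul y (join (mpow x n) y))" .
  moreover have "le (join (mpow x (Suc n)) (mul x y)) ?J"
    using Suc.prems mul_lower2[of x y] join_upper2[of "mpow x (Suc n)" y]
      le_trans[of "mul x y" y ?J] join_upper1[of "mpow x (Suc n)" y]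
    by (simp add: join_least del: mpow.simps)
  moreover have "le (mul y (join (mpow x n) y)) ?J"
    using Suc.prems mul_lower1[of y "join (mpow x n) y"] join_upper2[of "mpow x (Suc n)" y]
      le_trans[of "mul y (join (mpow x n) y)" y ?J] by (simp del: mpow.simps)
  ultimately have "le one ?J" using Suc.prems join_least by (simp del: mpow.simps)
  then show ?case using J le_antisym[of ?J one] by simp
qed

lemma meet_closed_common_witness:
  assumes "finite I" "Phi \<subseteq> A" "one \<in> Phi" "\<And>a a'. a \<in> Phi \<Longrightarrow> a' \<in> Phi \<Longrightarrow> meet a a' \<in> Phi"
    and down: "\<And>i a a'. i \<in> I \<Longrightarrow> a \<in> Phi \<Longrightarrow> a' \<in> Phi \<Longrightarrow> le a' a \<Longrightarrow> P i a \<Longrightarrow> P i a'"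
    and witness: "\<forall>i\<in>I. \<exists>a\<in>Phi. P i a"
  shows "\<exists>a\<in>Phi. \<forall>i\<in>I. P i a"
proof -
  have "\<exists>a\<in>Phi. \<forall>i\<in>J. P i a" if "J \<subseteq> I" for J
    using finite_subset[OF that assms(1)] that
  proof (induction J rule: finite_induct)
    case empty then show ?case using assms(3) by blast
  next
    case (insert j J)
    then obtain a b where ab: "a \<in> Phi" "\<forall>i\<in>J. P i a" "b \<in> Phi" "P j b" using witness by blast
    have m: "meet a b \<in> Phi" "le (meet a b) a" "le (meet a b) b"
      using ab assms(2,4) meet_lower1[of a b] meet_lower2[of a b] by auto
    have "P j (meet a b)" using down[OF _ ab(3) m(1,3) ab(4)] insert.prems by simp
    moreover have "\<forall>i\<in>J. P i (meet a b)" using down[OF _ ab(1) m(1,2)] ab(2) insert.prems by blast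
    ultimately show ?case using m(1) by blast
  qed
  then show ?thesis by blast
qed

end

subsection \<open>Maximal filters\<close>

context mv
begin

abbreviation mvfilter where "mvfilter \<equiv> mv_filter A ad ng z"
abbreviation SpecM where "SpecM \<equiv> max_filters A ad ng z"

lemma mvfilter_subset: "mvfilter F \<Longrightarrow> F \<subseteq> A" by (simp add: mv_filter_def)
lemma mvfilter_one: "mvfilter F \<Longrightarrow> one \<in> F" by (simp add: mv_filter_def mv_one_def)
lemma mvfilter_mul: "mvfilter F \<Longrightarrow> x \<in> F \<Longrightarrow> y \<in> F \<Longrightarrow> mul x y \<in> F"
  by (simp add: mv_filter_def)
lemma mvfilter_up: "mvfilter F \<Longrightarrow> x \<in> F \<Longrightarrow> le x y \<Longrightarrow> y \<in> A \<Longrightarrow> y \<in> F"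
  by (simp add: mv_filter_def)
lemma mvfilter_meet:
  assumes "mvfilter F" "x \<in> F" "y \<in> F"
  shows "meet x y \<in> F"
proof -
  have "x \<in> A" "y \<in> A" using assms mvfilter_subset by auto
  then show ?thesis
    using assms mvfilter_mul mvfilter_up[of F "mul x y" "meet x y"] meet_greatest mul_lower1 mul_lower2
    by simp
qed
lemma mvfilter_mpow: "mvfilter F \<Longrightarrow> x \<in> F \<Longrightarrow> mpow x n \<in> F"
  by (induction n) (auto simp: mvfilter_one mvfilter_mul)
lemma mvfilter_z_iff: "mvfilter F \<Longrightarrow> z \<in> F \<longleftrightarrow> F = A"
  by (auto dest: mvfilter_subset intro: mvfilter_up[of F z])

lemma SpecM_mvfilter: "F \<in> SpecM \<Longrightarrow> mvfilter F" by (simp add: max_filters_def)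
lemma z_notin_SpecM: "F \<in> SpecM \<Longrightarrow> z \<notin> F"
  using mvfilter_z_iff by (simp add: max_filters_def)
lemma SpecM_maximal: "F \<in> SpecM \<Longrightarrow> mvfilter F' \<Longrightarrow> F \<subseteq> F' \<Longrightarrow> z \<notin> F' \<Longrightarrow> F' = F"
  using mvfilter_z_iff by (simp add: max_filters_def)

lemma notin_SpecM_if_le: "x \<in> A \<Longrightarrow> le y x \<Longrightarrow> \<forall>F\<in>SpecM. x \<notin> F \<Longrightarrow> \<forall>F\<in>SpecM. y \<notin> F"
  using mvfilter_up SpecM_mvfilter by blast

lemma mvfilter_Union_chain:
  assumes "C \<noteq> {}" "\<forall>F\<in>C. mvfilter F" "\<forall>X\<in>C. \<forall>Y\<in>C. X \<subseteq> Y \<or> Y \<subseteq> X"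
  shows "mvfilter (\<Union>C)"
  unfolding mv_filter_def
proof (intro conjI ballI impI)
  show "\<Union>C \<subseteq> A" "mv_one ng z \<in> \<Union>C" using assms by (auto simp: mv_filter_def)
next
  fix x y assume "x \<in> \<Union>C" "y \<in> \<Union>C"
  then obtain X Y where XY: "X \<in> C" "Y \<in> C" "x \<in> X" "y \<in> Y" by blast
  then have "X \<union> Y \<in> C" using assms(3) by (metis sup.absorb1 sup.absorb2)
  then have "mul x y \<in> X \<union> Y" using XY assms(2) mvfilter_mul by blast
  then show "mul x y \<in> \<Union>C" using \<open>X \<union> Y \<in> C\<close> by blast
next
  fix x y assume "x \<in> \<Union>C" "y \<in> A" "le x y"
  then show "y \<in> \<Union>C" using assms(2) mvfilter_up by blast
qed

lemma mvfilter_extends_to_SpecM: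
  assumes "mvfilter F" "z \<notin> F"
  shows "\<exists>M\<in>SpecM. F \<subseteq> M"
proof -
  define S where "S = {F'. mvfilter F' \<and> F \<subseteq> F' \<and> z \<notin> F'}"
  have "\<exists>U\<in>S. \<forall>X\<in>C. X \<subseteq> U" if C: "C \<in> chains S" for C
  proof (cases "C = {}")
    case True then show ?thesis using assms by (auto simp: S_def)
  next
    case False
    have "C \<subseteq> S" using C chainsD2 by blast
    then have "\<Union>C \<in> S"
      using False mvfilter_Union_chain[of C] chainsD[OF C] by (auto simp: S_def)
    then show ?thesis by blast
  qed
  then have "\<exists>M\<in>S. \<forall>X\<in>S. M \<subseteq> X \<longrightarrow> X = M" by (intro Zorn_Lemma2) blast
  then obtain M where M: "M \<in> S" "\<forall>X\<in>S. M \<subseteq> X \<longrightarrow> X = M" by blast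
  have "M \<in> SpecM"
    unfolding max_filters_def
  proof (intro CollectI conjI allI impI)
    show "mvfilter M" "M \<noteq> A" using M by (auto simp: S_def)
  next
    fix F' assume F': "mvfilter F' \<and> M \<subseteq> F' \<and> F' \<noteq> A"
    then have "F' \<in> S" using M mvfilter_z_iff[of F'] by (auto simp: S_def)
    then show "F' = M" using M F' by blast
  qed
  then show ?thesis using M by (auto simp: S_def)
qed

lemma mvfilter_generated_by_directed:
  assumes S: "S \<subseteq> A" "S \<noteq> {}" and dir: "\<And>s s'. s \<in> S \<Longrightarrow> s' \<in> S \<Longrightarrow> \<exists>t\<in>S. le t s \<and> le t s'"
  shows "mvfilter {y\<in>A. \<exists>s\<in>S. \<exists>n. le (mpow s n) y}"
  unfolding mv_filter_def
proof (intro conjI ballI impI)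
  show "mv_one ng z \<in> {y\<in>A. \<exists>s\<in>S. \<exists>n. le (mpow s n) y}"
    using S by (fastforce simp: mv_one_def intro: exI[of _ 0])
next
  fix x y assume "x \<in> {y\<in>A. \<exists>s\<in>S. \<exists>n. le (mpow s n) y}" "y \<in> {y\<in>A. \<exists>s\<in>S. \<exists>n. le (mpow s n) y}"
  then obtain s m s' n where h: "x \<in> A" "y \<in> A" "s \<in> S" "s' \<in> S" "le (mpow s m) x" "le (mpow s' n) y"
    by blast
  obtain t where t: "t \<in> S" "le t s" "le t s'" using dir h by blast
  have A: "s \<in> A" "s' \<in> A" "t \<in> A" using S h t by auto
  have "le (mpow t m) x" "le (mpow t n) y"
    using A h t mpow_mono[of t s m] mpow_mono[of t s' n]
      le_trans[of "mpow t m" "mpow s m" x] le_trans[of "mpow t n" "mpow s' n" y] by simp_all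
  then have "le (mpow t (m + n)) (mul x y)" using A h by (simp add: mpow_add mul_mono)
  then show "mul x y \<in> {y\<in>A. \<exists>s\<in>S. \<exists>n. le (mpow s n) y}" using h t by auto
next
  fix x y assume "x \<in> {y\<in>A. \<exists>s\<in>S. \<exists>n. le (mpow s n) y}" "y \<in> A" "le x y"
  then obtain s n where "s \<in> S" "le (mpow s n) x" "x \<in> A" by blast
  then show "y \<in> {y\<in>A. \<exists>s\<in>S. \<exists>n. le (mpow s n) y}"
    using S \<open>y \<in> A\<close> \<open>le x y\<close> le_trans[of "mpow s n" x y] by auto
qed auto

lemma directed_in_SpecM_or_nilpotent:
  assumes S: "S \<subseteq> A" "S \<noteq> {}" and dir: "\<And>s s'. s \<in> S \<Longrightarrow> s' \<in> S \<Longrightarrow> \<exists>t\<in>S. le t s \<and> le t s'"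
  shows "(\<exists>F\<in>SpecM. S \<subseteq> F) \<or> (\<exists>s\<in>S. \<exists>n. mpow s n = z)"
proof (cases "z \<in> {y\<in>A. \<exists>s\<in>S. \<exists>n. le (mpow s n) y}")
  case True
  then obtain s n where "s \<in> S" "le (mpow s n) z" by blast
  then have "mpow s n = z" using S le_antisym[of "mpow s n" z] by auto
  then show ?thesis using \<open>s \<in> S\<close> by blast
next
  case False
  then obtain F where F: "F \<in> SpecM" "{y\<in>A. \<exists>s\<in>S. \<exists>n. le (mpow s n) y} \<subseteq> F"
    using mvfilter_extends_to_SpecM mvfilter_generated_by_directed[OF S dir] by blast
  have "S \<subseteq> {y\<in>A. \<exists>s\<in>S. \<exists>n. le (mpow s n) y}"
  proof
    fix s assume s: "s \<in> S"
    moreover have "s \<in> A" using S s by blast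
    moreover have "le (mpow s 1) s" using \<open>s \<in> A\<close> by simp
    ultimately show "s \<in> {y\<in>A. \<exists>s\<in>S. \<exists>n. le (mpow s n) y}" by blast
  qed
  then have "S \<subseteq> F" using F(2) by (rule subset_trans)
  then show ?thesis using F(1) by blast
qed

lemma SpecM_ng_mpow:
  assumes F: "F \<in> SpecM" and x: "x \<in> A" "x \<notin> F"
  shows "\<exists>n. ng (mpow x n) \<in> F"
proof -
  have fF: "mvfilter F" using F SpecM_mvfilter by blast
  have FA: "F \<subseteq> A" using mvfilter_subset[OF fF] .
  have "(\<exists>M\<in>SpecM. (\<lambda>f. mul f x) ` F \<subseteq> M) \<or> (\<exists>s\<in>(\<lambda>f. mul f x) ` F. \<exists>n. mpow s n = z)"
  proof (rule directed_in_SpecM_or_nilpotent)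
    show "(\<lambda>f. mul f x) ` F \<subseteq> A" "(\<lambda>f. mul f x) ` F \<noteq> {}"
      using FA x mvfilter_one[OF fF] by auto
    fix s s' assume "s \<in> (\<lambda>f. mul f x) ` F" "s' \<in> (\<lambda>f. mul f x) ` F"
    then obtain f f' where "f \<in> F" "f' \<in> F" "s = mul f x" "s' = mul f' x" by blast
    moreover have "f \<in> A" "f' \<in> A" using FA \<open>f \<in> F\<close> \<open>f' \<in> F\<close> by auto
    ultimately show "\<exists>t\<in>(\<lambda>f. mul f x) ` F. le t s \<and> le t s'"
      using x mvfilter_mul[OF fF] mul_mono_left[of "mul f f'" f x] mul_mono_left[of "mul f f'" f' x]
        mul_lower1[of f f'] mul_lower2[of f f'] by (intro bexI[of _ "mul (mul f f') x"]) auto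
  qed
  moreover have False if M: "M \<in> SpecM" "(\<lambda>f. mul f x) ` F \<subseteq> M" for M
  proof -
    have fM: "mvfilter M" using M SpecM_mvfilter by blast
    have "F \<subseteq> M" using M FA x mvfilter_up[OF fM] mul_lower1 by blast
    moreover have "x \<in> M" using M mvfilter_one[OF fF] x by force
    ultimately show False using SpecM_maximal[OF F fM] z_notin_SpecM[OF M(1)] x by blast
  qed
  ultimately obtain f n where f: "f \<in> F" "mpow (mul f x) n = z" by blast
  then have "mul (mpow f n) (ng (ng (mpow x n))) = z" using FA x by (simp add: mpow_mul subsetD)
  then have "le (mpow f n) (ng (mpow x n))" using FA f x le_iff_mul_ng_eq_z by (simp add: subsetD)
  then have "ng (mpow x n) \<in> F" using mvfilter_up[OF fF mvfilter_mpow[OF fF f(1)]] x by simp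
  then show ?thesis ..
qed

lemma SpecM_prime:
  assumes F: "F \<in> SpecM" and xy: "x \<in> A" "y \<in> A"
  shows "imp x y \<in> F \<or> imp y x \<in> F"
proof (rule ccontr)
  let ?u = "imp x y" and ?v = "imp y x"
  assume "\<not> (?u \<in> F \<or> ?v \<in> F)"
  moreover have "?u \<in> A" "?v \<in> A" using xy by simp_all
  ultimately obtain m n where mn: "ng (mpow ?u n) \<in> F" "ng (mpow ?v m) \<in> F"
    using SpecM_ng_mpow[OF F] by blast
  have "join ?u ?v = one" using prelinearity xy by simp
  then have "join (mpow ?u n) ?v = one" using join_mpow_eq_one xy by simp
  then have "join ?v (mpow ?u n) = one" using join_commute[of "mpow ?u n" ?v] xy by simp
  then have "join (mpow ?v m) (mpow ?u n) = one" using join_mpow_eq_one xy by simp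
  then have "ad (mpow ?v m) (mpow ?u n) = one"
    using join_le_ad[of "mpow ?v m" "mpow ?u n"] xy le_antisym[of "ad (mpow ?v m) (mpow ?u n)" one]
    by simp
  then have "mul (ng (mpow ?v m)) (ng (mpow ?u n)) = z" using xy ng_ad[of "mpow ?v m" "mpow ?u n"] by simp
  moreover have "mul (ng (mpow ?v m)) (ng (mpow ?u n)) \<in> F" using mn F SpecM_mvfilter mvfilter_mul by blast
  ultimately show False using F z_notin_SpecM by simp
qed

end

lemma rat_between_unit:
  fixes x y :: real
  assumes "0 \<le> x" "x < y" "y \<le> 1"
  shows "\<exists>r::rat. 0 \<le> r \<and> r \<le> 1 \<and> x < of_rat r \<and> of_rat r < y"
proof -
  obtain r :: rat where r: "x < of_rat r" "of_rat r < y" using of_rat_dense assms(2) by blast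
  then have "(0::real) \<le> of_rat r" "(of_rat r::real) \<le> 1" using assms by linarith+
  then show ?thesis using r by auto
qed

lemma rat_approx_below:
  fixes x e :: real
  assumes "0 \<le> x" "x \<le> 1" "0 < e"
  shows "\<exists>r::rat. 0 \<le> r \<and> r \<le> 1 \<and> of_rat r \<le> x \<and> x - e < of_rat r"
proof (cases "x - e < 0")
  case True then show ?thesis using assms by (intro exI[of _ 0]) auto
next
  case False then show ?thesis using rat_between_unit[of "x - e" x] assms by force
qed

lemma eq_if_same_rat_lower_bounds:
  fixes x y :: real
  assumes "x \<in> {0..1}" "y \<in> {0..1}"
    and same: "\<And>r. 0 \<le> r \<Longrightarrow> r \<le> 1 \<Longrightarrow> of_rat r \<le> x \<longleftrightarrow> of_rat r \<le> y"
  shows "x = y"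
proof (rule linorder_cases[of x y])
  assume "x < y"
  then show ?thesis using rat_between_unit[of x y] assms by (force dest: same)
next
  assume "y < x"
  then show ?thesis using rat_between_unit[of y x] assms by (force dest: same)
qed

lemma grid_point_below:
  fixes x :: real and K :: nat
  assumes x: "0 \<le> x" "x \<le> 1" and K: "0 < K"
  obtains i where "i \<le> K" "real i / real K \<le> x" "x - 1 / real K < real i / real K"
proof -
  define i where "i = nat \<lfloor>x * real K\<rfloor>"
  have Kr: "(0::real) < real K" using K by simp
  have fl: "real i \<le> x * real K" "x * real K < real i + 1" using x by (simp_all add: i_def)
  moreover have "x * real K \<le> real K" using x Kr by (simp add: mult_left_le_one_le)
  ultimately have "i \<le> K" by linarith
  moreover have "real i / real K \<le> x" using fl Kr by (simp add: divide_le_eq mult.commute)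
  moreover have "x < (real i + 1) / real K" using fl(2) Kr by (simp add: pos_less_divide_eq)
  then have "x - 1 / real K < real i / real K" by (simp add: add_divide_distrib)
  ultimately show ?thesis using that by blast
qed

lemma cSup_add_le:
  fixes X Y :: "real set"
  assumes "X \<noteq> {}" "Y \<noteq> {}" "\<And>x y. x \<in> X \<Longrightarrow> y \<in> Y \<Longrightarrow> x + y \<le> b"
  shows "Sup X + Sup Y \<le> b"
proof -
  have "Sup X \<le> b - y" if "y \<in> Y" for y
    using assms that by (intro cSup_least) (auto simp: algebra_simps)
  then have "Sup Y \<le> b - Sup X" using assms by (intro cSup_least) (auto simp: algebra_simps)
  then show ?thesis by simp
qed

section \<open>Pavelka algebras\<close>

locale pavelka =
  fixes A :: "'a set" and ad :: "'a \<Rightarrow> 'a \<Rightarrow> 'a" and ng :: "'a \<Rightarrow> 'a" and c :: "rat \<Rightarrow> 'a"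
  assumes pavelka: "pavelka_algebra A ad ng c"

sublocale pavelka \<subseteq> mv A ad ng "c 0"
  using pavelka by unfold_locales (simp add: pavelka_algebra_def)

context pavelka
begin

lemma c_in [simp]: "0 \<le> r \<Longrightarrow> r \<le> 1 \<Longrightarrow> c r \<in> A"
  using pavelka by (simp add: pavelka_algebra_def)
lemma c_ad: "0 \<le> r \<Longrightarrow> r \<le> 1 \<Longrightarrow> 0 \<le> s \<Longrightarrow> s \<le> 1 \<Longrightarrow> ad (c r) (c s) = c (min (r + s) 1)"
  using pavelka by (simp add: pavelka_algebra_def)
lemma c_ng: "0 \<le> r \<Longrightarrow> r \<le> 1 \<Longrightarrow> ng (c r) = c (1 - r)"
  using pavelka by (simp add: pavelka_algebra_def)
lemma c_one: "c 1 = one" using c_ng[of 0] by simp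
lemma c_imp: "0 \<le> r \<Longrightarrow> r \<le> 1 \<Longrightarrow> 0 \<le> s \<Longrightarrow> s \<le> 1 \<Longrightarrow> imp (c r) (c s) = c (min (1 - r + s) 1)"
  by (simp add: imp_def' c_ng c_ad)
lemma c_mul: "0 \<le> r \<Longrightarrow> r \<le> 1 \<Longrightarrow> 0 \<le> s \<Longrightarrow> s \<le> 1 \<Longrightarrow> mul (c r) (c s) = c (max (r + s - 1) 0)"
proof -
  assume a: "0 \<le> r" "r \<le> 1" "0 \<le> s" "s \<le> 1"
  have "mul (c r) (c s) = c (1 - min (1 - r + (1 - s)) 1)" using a by (simp add: mul_def' c_ng c_ad)
  also have "1 - min (1 - r + (1 - s)) 1 = max (r + s - 1) 0" by (simp add: min_def max_def)
  finally show ?thesis .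
qed
lemma c_mpow: "0 \<le> r \<Longrightarrow> r \<le> 1 \<Longrightarrow> mpow (c r) n = c (max (1 - of_nat n * (1 - r)) 0)"
proof (induction n)
  case 0 then show ?case by (simp add: c_one)
next
  case (Suc n)
  define p where "p = max (1 - of_nat n * (1 - r)) 0"
  have "of_nat n * (1 - r) \<ge> 0" using Suc.prems by simp
  then have p: "0 \<le> p" "p \<le> 1" by (auto simp: p_def)
  have "mpow (c r) (Suc n) = c (max (r + p - 1) 0)" using Suc p by (simp add: p_def c_mul)
  also have "max (r + p - 1) 0 = max (1 - of_nat (Suc n) * (1 - r)) 0"
    using Suc.prems by (simp add: p_def max_def algebra_simps)
  finally show ?case .
qed

lemma c_notin_SpecM:
  assumes F: "F \<in> SpecM" and r: "0 \<le> r" "r < 1"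
  shows "c r \<notin> F"
proof
  assume "c r \<in> F"
  then have "mpow (c r) n \<in> F" for n using F SpecM_mvfilter mvfilter_mpow by blast
  moreover obtain n :: nat where "1 / (1 - r) < of_nat n" using reals_Archimedean2 by blast
  then have "1 < of_nat n * (1 - r)" using r by (simp add: divide_less_eq mult.commute)
  then have "mpow (c r) n = c 0" using r by (simp add: c_mpow)
  ultimately show False using F z_notin_SpecM by metis
qed
lemma c_in_SpecM_iff: "F \<in> SpecM \<Longrightarrow> 0 \<le> r \<Longrightarrow> r \<le> 1 \<Longrightarrow> c r \<in> F \<longleftrightarrow> r = 1"
  using c_notin_SpecM[of F r] c_one mvfilter_one SpecM_mvfilter by (cases "r < 1") auto
lemma imp_c_c_in_SpecM_iff: "F \<in> SpecM \<Longrightarrow> 0 \<le> r \<Longrightarrow> r \<le> 1 \<Longrightarrow> 0 \<le> s \<Longrightarrow> s \<le> 1 \<Longrightarrow>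
   imp (c r) (c s) \<in> F \<longleftrightarrow> r \<le> s"
  using c_in_SpecM_iff[of F "min (1 - r + s) 1"] by (auto simp: c_imp min_def)

subsection \<open>The value of an element at a maximal filter\<close>

text \<open>\<open>cut_val F a\<close> is the paper's \<open>a/F\<close>: the supremum of the rationals \<open>r\<close> with \<open>c r \<rightarrow> a \<in> F\<close>.
  Off the carrier it is \<open>0\<close>, as \<^const>\<open>mv_hom_unit\<close> demands.\<close>

definition lower_cut :: "'a set \<Rightarrow> 'a \<Rightarrow> rat set" where
  "lower_cut F a = {r. 0 \<le> r \<and> r \<le> 1 \<and> imp (c r) a \<in> F}"

definition cut_val :: "'a set \<Rightarrow> 'a \<Rightarrow> real" where
  "cut_val F a = (if a \<in> A then Sup (real_of_rat ` lower_cut F a) else 0)"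

lemma zero_in_lower_cut: "F \<in> SpecM \<Longrightarrow> a \<in> A \<Longrightarrow> 0 \<in> lower_cut F a"
  using mvfilter_one SpecM_mvfilter by (simp add: lower_cut_def)

lemma bdd_above_lower_cut: "bdd_above (real_of_rat ` lower_cut F a)"
  by (rule bdd_aboveI[of _ 1]) (auto simp: lower_cut_def)

lemma cut_val_ge: "a \<in> A \<Longrightarrow> r \<in> lower_cut F a \<Longrightarrow> of_rat r \<le> cut_val F a"
  unfolding cut_val_def using bdd_above_lower_cut by (simp add: cSup_upper)

lemma cut_val_le_one: "F \<in> SpecM \<Longrightarrow> cut_val F a \<le> 1"
  unfolding cut_val_def using zero_in_lower_cut[of F a]
  by (auto intro!: cSup_least simp: lower_cut_def)

lemma cut_val_nonneg: "F \<in> SpecM \<Longrightarrow> 0 \<le> cut_val F a"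
  using cut_val_ge[OF _ zero_in_lower_cut, of a F] by (auto simp: cut_val_def)

lemma cut_val_less_lower_cut:
  "F \<in> SpecM \<Longrightarrow> a \<in> A \<Longrightarrow> x < cut_val F a \<Longrightarrow> \<exists>s\<in>lower_cut F a. x < of_rat s"
  unfolding cut_val_def
  using zero_in_lower_cut[of F a] bdd_above_lower_cut less_cSup_iff[of "real_of_rat ` lower_cut F a" x]
  by auto

lemma imp_c_notin_SpecM_if_ng_mpow:
  assumes F: "F \<in> SpecM" and b: "b \<in> A" and n: "ng (mpow b n) \<in> F"
    and t: "0 \<le> t" "t \<le> 1" "of_nat n * (1 - t) < 1"
  shows "imp (c t) b \<notin> F"
proof
  have fF: "mvfilter F" using F SpecM_mvfilter by blast
  assume "imp (c t) b \<in> F"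
  then have "mpow (imp (c t) b) n \<in> F" using fF mvfilter_mpow by blast
  then have "imp (mpow (c t) n) (mpow b n) \<in> F"
    using mvfilter_up[OF fF _ mpow_imp_le] t b by simp
  then have "mul (imp (mpow (c t) n) (mpow b n)) (imp (mpow b n) (c 0)) \<in> F"
    using fF n b mvfilter_mul by simp
  then have "ng (mpow (c t) n) \<in> F"
    using mvfilter_up[OF fF _ imp_trans[of "mpow (c t) n" "mpow b n" "c 0"]] t b by simp
  moreover define p where "p = 1 - of_nat n * (1 - t)"
  have "0 < p" "p \<le> 1" using t by (simp_all add: p_def)
  moreover have "ng (mpow (c t) n) = c (1 - p)"
    using t \<open>0 < p\<close> \<open>p \<le> 1\<close> by (simp add: c_mpow c_ng p_def[symmetric])
  ultimately show False using c_notin_SpecM[OF F, of "1 - p"] by simp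
qed

lemma imp_c_chain_bound:
  assumes F: "F \<in> SpecM" and a: "a \<in> A"
    and r: "0 \<le> r" "r \<le> 1" and s: "0 \<le> s" "s \<le> 1" and t: "0 \<le> t" "t \<le> 1"
    and sa: "imp (c s) a \<in> F" and rat: "imp (imp (c r) a) (c t) \<in> F"
  shows "min (1 - r + s) 1 \<le> t"
proof -
  have fF: "mvfilter F" using F SpecM_mvfilter by blast
  have "mul (imp (c s) a) (imp (imp (c r) a) (c t)) \<in> F" using sa rat fF mvfilter_mul by blast
  then have "imp (imp (c r) (c s)) (c t) \<in> F"
    using mvfilter_up[OF fF _ imp_mul_imp_imp_le] a r s t by simp
  moreover have "imp (c r) (c s) = c (min (1 - r + s) 1)" using r s by (simp add: c_imp)
  ultimately show ?thesis using imp_c_c_in_SpecM_iff[OF F, of "min (1 - r + s) 1" t] r s t by simp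
qed

lemma imp_c_in_SpecM_iff:
  assumes F: "F \<in> SpecM" and a: "a \<in> A" and r: "0 \<le> r" "r \<le> 1"
  shows "imp (c r) a \<in> F \<longleftrightarrow> of_rat r \<le> cut_val F a"
proof
  assume "imp (c r) a \<in> F"
  then show "of_rat r \<le> cut_val F a" using cut_val_ge[OF a] r by (simp add: lower_cut_def)
next
  assume r_le: "of_rat r \<le> cut_val F a"
  let ?b = "imp (c r) a"
  show "?b \<in> F"
  proof (rule ccontr)
    assume "?b \<notin> F"
    moreover have "?b \<in> A" using a r by simp
    ultimately obtain n where n: "ng (mpow ?b n) \<in> F" using SpecM_ng_mpow[OF F] by blast
    txt \<open>Since \<open>\<not> (b\<^sup>n)\<close> lies in \<open>F\<close>, \<open>b\<close> cannot dominate \<open>c (1 - d)\<close> modulo \<open>F\<close> for small \<open>d\<close>; by primeness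
      \<open>b \<rightarrow> c (1 - d) \<in> F\<close>, which contradicts \<open>r \<le> a/F\<close>.\<close>
    define d :: rat where "d = 1 / (2 * (of_nat n + 1))"
    have d: "0 < d" "d \<le> 1/2" "of_nat n * d < 1" by (auto simp: d_def field_simps)
    consider "imp (c (1 - d)) ?b \<in> F" | "imp ?b (c (1 - d)) \<in> F"
      using SpecM_prime[OF F, of "c (1 - d)" ?b] d a r by auto
    then show False
    proof cases
      case 1
      then show False using imp_c_notin_SpecM_if_ng_mpow[OF F _ n, of "1 - d"] a r d by simp
    next
      case 2
      have "(0::real) < of_rat d" using d by simp
      then have "of_rat (r - d) < cut_val F a" using r_le unfolding of_rat_diff by linarith
      then obtain s where "s \<in> lower_cut F a" "of_rat (r - d) < (of_rat s :: real)"
        using cut_val_less_lower_cut[OF F a] by blast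
      then have s: "0 \<le> s" "s \<le> 1" "imp (c s) a \<in> F" "r - d < s"
        by (auto simp: lower_cut_def of_rat_less)
      have "min (1 - r + s) 1 \<le> 1 - d"
        using imp_c_chain_bound[OF F a r s(1,2) _ _ s(3) 2] d by simp
      then show False using s d by (auto simp: min_def split: if_splits)
    qed
  qed
qed

lemma mem_SpecM_iff_cut_val: "F \<in> SpecM \<Longrightarrow> a \<in> A \<Longrightarrow> a \<in> F \<longleftrightarrow> cut_val F a = 1"
  using imp_c_in_SpecM_iff[of F a 1] cut_val_le_one[of F a] by (auto simp: c_one)

lemma cut_val_c: "F \<in> SpecM \<Longrightarrow> 0 \<le> q \<Longrightarrow> q \<le> 1 \<Longrightarrow> cut_val F (c q) = of_rat q"
  using imp_c_c_in_SpecM_iff imp_c_in_SpecM_iff[of F "c q"] cut_val_nonneg cut_val_le_one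
  by (intro eq_if_same_rat_lower_bounds) (auto simp: of_rat_less_eq)

lemma cut_val_ng:
  assumes F: "F \<in> SpecM" and a: "a \<in> A"
  shows "cut_val F (ng a) = 1 - cut_val F a"
proof (rule antisym)
  have fF: "mvfilter F" using F SpecM_mvfilter by blast
  have "of_rat r + of_rat s \<le> (1::real)" if "r \<in> lower_cut F a" "s \<in> lower_cut F (ng a)" for r s
  proof -
    have rs: "0 \<le> r" "r \<le> 1" "0 \<le> s" "s \<le> 1" using that by (auto simp: lower_cut_def)
    have "imp (c s) (ng a) = imp a (c (1 - s))" using imp_contrapos[of a "c (1 - s)"] a rs by (simp add: c_ng)
    then have "mul (imp (c r) a) (imp a (c (1 - s))) \<in> F" using that fF mvfilter_mul by (simp add: lower_cut_def)
    then have "imp (c r) (c (1 - s)) \<in> F" using mvfilter_up[OF fF _ imp_trans] a rs by simp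
    then have "r \<le> 1 - s" using imp_c_c_in_SpecM_iff[OF F] rs by simp
    then show ?thesis by (simp flip: of_rat_add)
  qed
  then have "cut_val F a + cut_val F (ng a) \<le> 1"
    unfolding cut_val_def using a zero_in_lower_cut[OF F a] zero_in_lower_cut[OF F ng_in[OF a]]
    by (auto intro!: cSup_add_le)
  then show "cut_val F (ng a) \<le> 1 - cut_val F a" by simp
next
  show "1 - cut_val F a \<le> cut_val F (ng a)"
  proof (rule ccontr)
    assume "\<not> ?thesis"
    then obtain r where r: "0 \<le> r" "r \<le> 1" "cut_val F a < of_rat r" "of_rat r < 1 - cut_val F (ng a)"
      using rat_between_unit[of "cut_val F a" "1 - cut_val F (ng a)"] cut_val_nonneg[OF F] by force
    consider "imp (c r) a \<in> F" | "imp a (c r) \<in> F" using SpecM_prime[OF F, of "c r" a] r a by auto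
    then show False
    proof cases
      case 1 then show False using imp_c_in_SpecM_iff[OF F a r(1,2)] r by simp
    next
      case 2
      then have "imp (c (1 - r)) (ng a) \<in> F" using imp_contrapos[of a "c r"] a r by (simp add: c_ng)
      then show False using imp_c_in_SpecM_iff[OF F, of "ng a" "1 - r"] a r by (simp add: of_rat_diff)
    qed
  qed
qed

lemma cut_val_mul_ge:
  assumes F: "F \<in> SpecM" and a: "a \<in> A" and b: "b \<in> A"
  shows "cut_val F a + cut_val F b - 1 \<le> cut_val F (mul a b)"
proof -
  have fF: "mvfilter F" using F SpecM_mvfilter by blast
  have "of_rat r + of_rat s \<le> cut_val F (mul a b) + 1"
    if "r \<in> lower_cut F a" "s \<in> lower_cut F b" for r s
  proof -
    have rs: "0 \<le> r" "r \<le> 1" "0 \<le> s" "s \<le> 1" using that by (auto simp: lower_cut_def)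
    have "mul (imp (c r) a) (imp (c s) b) \<in> F" using that fF mvfilter_mul by (simp add: lower_cut_def)
    then have "imp (mul (c r) (c s)) (mul a b) \<in> F"
      using mvfilter_up[OF fF _ imp_mul_imp_le_imp_mul] a b rs by simp
    then have "of_rat (max (r + s - 1) 0) \<le> cut_val F (mul a b)"
      using imp_c_in_SpecM_iff[OF F] a b rs by (simp add: c_mul)
    moreover have "of_rat (r + s - 1) \<le> (of_rat (max (r + s - 1) 0) :: real)"
      by (simp add: of_rat_less_eq)
    ultimately show ?thesis unfolding of_rat_add of_rat_diff by simp
  qed
  then have "cut_val F a + cut_val F b \<le> cut_val F (mul a b) + 1"
    unfolding cut_val_def using a b zero_in_lower_cut[OF F] by (auto intro!: cSup_add_le)
  then show ?thesis by simp
qed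

lemma cut_val_ad_ge:
  assumes F: "F \<in> SpecM" and a: "a \<in> A" and b: "b \<in> A"
  shows "min (cut_val F a + cut_val F b) 1 \<le> cut_val F (ad a b)"
proof (cases "cut_val F (ad a b) = 1")
  case False
  have fF: "mvfilter F" using F SpecM_mvfilter by blast
  have "of_rat r + of_rat s \<le> cut_val F (ad a b)"
    if "r \<in> lower_cut F a" "s \<in> lower_cut F b" for r s
  proof -
    have rs: "0 \<le> r" "r \<le> 1" "0 \<le> s" "s \<le> 1" using that by (auto simp: lower_cut_def)
    have "mul (imp (c r) a) (imp (c s) b) \<in> F" using that fF mvfilter_mul by (simp add: lower_cut_def)
    then have "imp (ad (c r) (c s)) (ad a b) \<in> F"
      using mvfilter_up[OF fF _ imp_mul_imp_le_imp_ad] a b rs by simp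
    then have "of_rat (min (r + s) 1) \<le> cut_val F (ad a b)"
      using imp_c_in_SpecM_iff[OF F] a b rs by (simp add: c_ad)
    then show ?thesis using False cut_val_le_one[OF F, of "ad a b"]
      by (auto simp: min_def of_rat_add split: if_splits)
  qed
  then have "cut_val F a + cut_val F b \<le> cut_val F (ad a b)"
    unfolding cut_val_def using a b zero_in_lower_cut[OF F] by (auto intro!: cSup_add_le)
  then show ?thesis by simp
qed simp

lemma cut_val_ad:
  assumes F: "F \<in> SpecM" and a: "a \<in> A" and b: "b \<in> A"
  shows "cut_val F (ad a b) = min (cut_val F a + cut_val F b) 1"
proof -
  have "cut_val F (ad a b) = 1 - cut_val F (mul (ng a) (ng b))"
    using F a b cut_val_ng[of F "mul (ng a) (ng b)"] by (simp add: ng_mul)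
  also have "\<dots> \<le> cut_val F a + cut_val F b"
    using cut_val_mul_ge[OF F, of "ng a" "ng b"] F a b by (simp add: cut_val_ng)
  finally show ?thesis using cut_val_ad_ge[OF F a b] cut_val_le_one[OF F, of "ad a b"] by linarith
qed

lemma cut_val_mul:
  "F \<in> SpecM \<Longrightarrow> a \<in> A \<Longrightarrow> b \<in> A \<Longrightarrow> cut_val F (mul a b) = max (cut_val F a + cut_val F b - 1) 0"
  by (simp add: mul_def' cut_val_ng cut_val_ad min_def max_def)

lemma cut_val_imp:
  "F \<in> SpecM \<Longrightarrow> a \<in> A \<Longrightarrow> b \<in> A \<Longrightarrow> cut_val F (imp a b) = min (1 - cut_val F a + cut_val F b) 1"
  by (simp add: imp_def' cut_val_ad cut_val_ng)

lemma cut_val_mono: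
  assumes F: "F \<in> SpecM" and ab: "a \<in> A" "b \<in> A" "le a b"
  shows "cut_val F a \<le> cut_val F b"
proof -
  have "imp a b \<in> F" using ab mvfilter_one[OF SpecM_mvfilter[OF F]] by (simp add: le_iff_imp_eq_one)
  then have "cut_val F (imp a b) = 1" using F ab mem_SpecM_iff_cut_val by simp
  then show ?thesis using F ab by (simp add: cut_val_imp min_def split: if_splits)
qed

lemma cut_val_hom:
  assumes F: "F \<in> SpecM"
  shows "mv_hom_unit A ad ng (c 0) (cut_val F)"
proof -
  have "\<forall>x. x \<notin> A \<longrightarrow> cut_val F x = 0" by (simp add: cut_val_def)
  then show ?thesis
    unfolding mv_hom_unit_def
    using cut_val_nonneg[OF F] cut_val_le_one[OF F] cut_val_ad[OF F] cut_val_ng[OF F] cut_val_c[OF F, of 0]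
    by simp
qed

lemma hom_c_multiple:
  assumes h: "mv_hom_unit A ad ng (c 0) h" and q: "0 < q"
  shows "k \<le> q \<Longrightarrow> h (c (of_nat k / of_nat q)) = min (of_nat k * h (c (1 / of_nat q))) 1"
proof (induction k)
  case 0
  then show ?case using h by (simp add: mv_hom_unit_def)
next
  case (Suc k)
  have q1: "(1::rat) / of_nat q \<le> 1" "0 \<le> (1::rat) / of_nat q" using q by (auto simp: field_simps)
  have qk: "(of_nat k::rat) / of_nat q \<le> 1" "0 \<le> (of_nat k::rat) / of_nat q"
    using q Suc.prems by (auto simp: field_simps)
  have "c (of_nat (Suc k) / of_nat q) = c (min (1 / of_nat q + of_nat k / of_nat q) 1)"
    using q Suc.prems by (simp add: field_simps min_def)
  also have "\<dots> = ad (c (1 / of_nat q)) (c (of_nat k / of_nat q))"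
    using q1 qk by (simp add: c_ad)
  finally have "h (c (of_nat (Suc k) / of_nat q)) = min (h (c (1 / of_nat q)) + h (c (of_nat k / of_nat q))) 1"
    using h q1 qk by (simp add: mv_hom_unit_def)
  moreover have "0 \<le> h (c (1 / of_nat q))" using h q1 by (simp add: mv_hom_unit_def)
  ultimately show ?case using Suc by (simp add: min_def algebra_simps)
qed

lemma hom_c:
  assumes h: "mv_hom_unit A ad ng (c 0) h" and r: "0 \<le> r" "r \<le> 1"
  shows "h (c r) = of_rat r"
proof -
  obtain k q :: nat where kq: "r = of_nat k / of_nat q" "0 < q"
  proof -
    obtain p d where pd: "quotient_of r = (p, d)" by (cases "quotient_of r") auto
    have "r = of_int p / of_int d" "0 < d" using quotient_of_div[OF pd] quotient_of_denom_pos[OF pd] by auto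
    moreover from this have "0 \<le> p" using r by (simp add: zero_le_divide_iff)
    ultimately show ?thesis using that[of "nat p" "nat d"] by simp
  qed
  have k: "k \<le> q" using r kq by (simp add: field_simps)
  define u where "u = h (c (1 / of_nat q))"
  have q1: "(1::rat) / of_nat q \<le> 1" "0 \<le> (1::rat) / of_nat q" using kq by (auto simp: field_simps)
  txt \<open>\<open>u = 1/q\<close> is forced by \<open>q \<cdot> u \<ge> 1\<close> together with \<open>h (\<not> c (1/q)) = 1 - u\<close>.\<close>
  have "min (of_nat q * u) 1 = 1"
    using hom_c_multiple[OF h kq(2), of q] kq h c_one by (simp add: u_def mv_hom_unit_def)
  then have qu: "1 \<le> of_nat q * u" by (simp add: min_def split: if_splits)
  have "ng (c (1 / of_nat q)) = c (of_nat (q - 1) / of_nat q)"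
    using q1 kq by (simp add: c_ng field_simps of_nat_diff)
  moreover have "h (ng (c (1 / of_nat q))) = 1 - u" using h q1 by (simp add: mv_hom_unit_def u_def)
  ultimately have "h (c (of_nat (q - 1) / of_nat q)) = 1 - u" by simp
  then have e: "min (of_nat (q - 1) * u) 1 = 1 - u"
    using hom_c_multiple[OF h kq(2), of "q - 1"] by (simp add: u_def)
  have "u = 1 / of_nat q"
  proof (cases "1 \<le> of_nat (q - 1) * u")
    case True
    then have "u = 0" using e min_absorb2[OF True] by linarith
    then show ?thesis using True by simp
  next
    case False
    then have "of_nat (q - 1) * u = 1 - u" using e by (simp add: min_def)
    then have "of_nat q * u = 1" using kq by (simp add: of_nat_diff algebra_simps)
    then show ?thesis using kq by (simp add: field_simps)
  qed
  then have "h (c r) = min (of_nat k * (1 / of_nat q)) 1"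
    using hom_c_multiple[OF h kq(2) k] kq by (simp add: u_def)
  also have "\<dots> = of_nat k / of_nat q" using k kq by (simp add: min_def field_simps)
  also have "\<dots> = of_rat r" using kq by (simp add: of_rat_divide)
  finally show ?thesis .
qed

lemma hom_eq_cut_val:
  assumes F: "F \<in> SpecM" and h: "mv_hom_unit A ad ng (c 0) h" and ker: "\<forall>y\<in>A. h y = 1 \<longleftrightarrow> y \<in> F"
  shows "h = cut_val F"
proof
  fix a
  show "h a = cut_val F a"
  proof (cases "a \<in> A")
    case False then show ?thesis using h by (simp add: mv_hom_unit_def cut_val_def)
  next
    case a: True
    show ?thesis
    proof (rule eq_if_same_rat_lower_bounds)
      show "h a \<in> {0..1}" "cut_val F a \<in> {0..1}"
        using h a cut_val_nonneg[OF F] cut_val_le_one[OF F] by (auto simp: mv_hom_unit_def)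
      fix r :: rat assume r: "0 \<le> r" "r \<le> 1"
      have "h (imp (c r) a) = min (1 - of_rat r + h a) 1"
        using h a r hom_c[OF h r] by (simp add: imp_def' mv_hom_unit_def)
      then have "of_rat r \<le> h a \<longleftrightarrow> h (imp (c r) a) = 1" by (auto simp: min_def)
      also have "\<dots> \<longleftrightarrow> imp (c r) a \<in> F" using ker a r by simp
      finally have "of_rat r \<le> h a \<longleftrightarrow> imp (c r) a \<in> F" .
      then show "of_rat r \<le> h a \<longleftrightarrow> of_rat r \<le> cut_val F a" using imp_c_in_SpecM_iff[OF F a r] by simp
    qed
  qed
qed

lemma quot_val_eq_cut_val: "F \<in> SpecM \<Longrightarrow> quot_val A ad ng (c 0) F = cut_val F"
  unfolding quot_val_def
  by (rule the_equality) (use cut_val_hom mem_SpecM_iff_cut_val hom_eq_cut_val in auto)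

lemma le_if_cut_val_le:
  assumes ss: "mv_semisimple A ad ng (c 0)" and ab: "a \<in> A" "b \<in> A"
    and cut_le: "\<And>F. F \<in> SpecM \<Longrightarrow> cut_val F a \<le> cut_val F b"
  shows "le a b"
proof (rule ccontr)
  assume "\<not> le a b"
  then have "imp a b \<noteq> one" using ab le_iff_imp_eq_one by simp
  then have "imp a b \<notin> {x\<in>A. \<forall>F\<in>SpecM. x \<in> F}" using ss by (simp add: mv_semisimple_def mv_one_def)
  then obtain F where F: "F \<in> SpecM" "imp a b \<notin> F" using ab by auto
  then have "cut_val F (imp a b) \<noteq> 1" using mem_SpecM_iff_cut_val ab by simp
  then show False using cut_le[OF F(1)] F ab by (simp add: cut_val_imp min_def split: if_splits)
qed

lemma cut_val_le_if_imp_c: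
  "F \<in> SpecM \<Longrightarrow> b \<in> A \<Longrightarrow> 0 \<le> s \<Longrightarrow> s \<le> 1 \<Longrightarrow> imp b (c s) \<in> F \<Longrightarrow> cut_val F b \<le> of_rat s"
  using mem_SpecM_iff_cut_val[of F "imp b (c s)"] by (simp add: cut_val_imp cut_val_c min_def split: if_splits)

text \<open>Only the grid point \<open>i/K\<close> just below \<open>a/F\<close> matters: there \<open>c (i/K) \<rightarrow> a \<in> F\<close>, so the
  hypothesis says \<open>b \<rightarrow> c (i/K - 1 + q) \<notin> F\<close>.\<close>

lemma cut_val_mul_c_le_if_grid:
  fixes K :: nat and q :: rat
  assumes F: "F \<in> SpecM" and a: "a \<in> A" and b: "b \<in> A" and K: "0 < K" and q: "1 / of_nat K \<le> q" "q \<le> 1"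
    and grid: "\<And>i. i \<le> K \<Longrightarrow> 0 \<le> of_nat i / of_nat K - 1 + q \<Longrightarrow>
      mul (imp (c (of_nat i / of_nat K)) a) (imp b (c (of_nat i / of_nat K - 1 + q))) \<notin> F"
  shows "cut_val F (mul (c (q - 1 / of_nat K)) a) \<le> cut_val F b"
proof -
  define al where "al = cut_val F a"
  define be where "be = cut_val F b"
  have al: "0 \<le> al" "al \<le> 1" using cut_val_nonneg[OF F] cut_val_le_one[OF F] by (auto simp: al_def)
  have be: "0 \<le> be" "be \<le> 1" using cut_val_nonneg[OF F] cut_val_le_one[OF F] by (auto simp: be_def)
  have q_real: "of_rat (q - 1 / of_nat K) = of_rat q - 1 / real K" by (simp add: of_rat_diff of_rat_divide)
  have "(0::rat) \<le> 1 / of_nat K" by simp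
  then have "0 \<le> q - 1 / of_nat K" "q - 1 / of_nat K \<le> 1" using q by linarith+
  then have "cut_val F (mul (c (q - 1 / of_nat K)) a) = max (of_rat (q - 1 / of_nat K) + al - 1) 0"
    using F a by (simp add: cut_val_mul cut_val_c al_def)
  then have "cut_val F (mul (c (q - 1 / of_nat K)) a) = max (of_rat q - 1 / real K + al - 1) 0"
    by (simp only: q_real)
  moreover have "of_rat q - 1 / real K + al - 1 < be" if pos: "0 < of_rat q - 1 / real K + al - 1"
  proof -
    obtain i where iK: "i \<le> K" and i: "real i / real K \<le> al" "al - 1 / real K < real i / real K"
      using grid_point_below[OF al K] .
    define r :: rat where "r = of_nat i / of_nat K"
    define s where "s = r - 1 + q"
    have r_real: "of_rat r = real i / real K" by (simp add: r_def of_rat_divide)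
    have r: "0 \<le> r" "r \<le> 1" using iK K by (auto simp: r_def field_simps)
    have r_al: "of_rat r \<le> al" "al - 1 / real K < of_rat r" using i by (simp_all add: r_real)
    then have s_gt: "of_rat q - 1 / real K + al - 1 < of_rat s" by (simp add: s_def of_rat_add of_rat_diff)
    then have "(0::real) < of_rat s" using pos by linarith
    then have s: "0 \<le> s" "s \<le> 1" using r q by (auto simp: s_def)
    have "cut_val F (imp (c r) a) = 1" using F a r r_al by (simp add: cut_val_imp cut_val_c al_def)
    moreover have "cut_val F (mul (imp (c r) a) (imp b (c s))) \<noteq> 1"
      using grid[OF iK] s mem_SpecM_iff_cut_val[OF F] a b r by (simp add: r_def s_def)
    ultimately have "min (1 - be + of_rat s) 1 \<noteq> 1"
      using F a b r s be by (simp add: cut_val_mul cut_val_imp cut_val_c be_def max_def min_def split: if_splits)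
    then show ?thesis using s_gt by (simp add: min_def split: if_splits)
  qed
  ultimately show ?thesis using be by (auto simp: be_def max_def)
qed

end

lemma luk_imp_le_one: "luk_imp x y \<le> 1" by (simp add: luk_imp_def)
lemma luk_imp_nonneg: "x \<le> 1 \<Longrightarrow> 0 \<le> y \<Longrightarrow> 0 \<le> luk_imp x y" by (simp add: luk_imp_def)

context pavelka
begin

abbreviation rel where "rel K \<equiv> time_rel A ad ng (c 0) K"

lemma rel_eq_INF: "F \<in> SpecM \<Longrightarrow> F' \<in> SpecM \<Longrightarrow>
  rel K F F' = (INF a\<in>A. luk_imp (cut_val F' (K a)) (cut_val F a))"
  by (simp add: time_rel_def quot_val_eq_cut_val)

lemma bdd_below_luk_imp_cut_val: "F \<in> SpecM \<Longrightarrow> F' \<in> SpecM \<Longrightarrow>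
  bdd_below ((\<lambda>a. luk_imp (cut_val F' (K a)) (cut_val F a)) ` A)"
  by (auto intro!: bdd_belowI[of _ 0] luk_imp_nonneg cut_val_le_one cut_val_nonneg)

lemma rel_le:
  "F \<in> SpecM \<Longrightarrow> F' \<in> SpecM \<Longrightarrow> a \<in> A \<Longrightarrow> rel K F F' \<le> luk_imp (cut_val F' (K a)) (cut_val F a)"
  unfolding rel_eq_INF by (rule cINF_lower[OF bdd_below_luk_imp_cut_val])

lemma rel_greatest:
  assumes "F \<in> SpecM" "F' \<in> SpecM" "\<And>a. a \<in> A \<Longrightarrow> x \<le> luk_imp (cut_val F' (K a)) (cut_val F a)"
  shows "x \<le> rel K F F'"
  unfolding rel_eq_INF[OF assms(1,2)] by (rule cINF_greatest) (use z_in assms(3) in blast)+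

lemma rel_less_iff:
  assumes "F \<in> SpecM" "F' \<in> SpecM"
  shows "rel K F F' < x \<longleftrightarrow> (\<exists>a\<in>A. luk_imp (cut_val F' (K a)) (cut_val F a) < x)"
proof -
  have "A \<noteq> {}" using z_in by blast
  then show ?thesis
    unfolding rel_eq_INF[OF assms] by (rule cINF_less_iff[OF _ bdd_below_luk_imp_cut_val[OF assms]])
qed

lemma rel_bounds: "F \<in> SpecM \<Longrightarrow> F' \<in> SpecM \<Longrightarrow> 0 \<le> rel K F F' \<and> rel K F F' \<le> 1"
  using rel_le[of F F' "c 0" K] luk_imp_le_one
  by (auto intro!: rel_greatest luk_imp_nonneg cut_val_le_one cut_val_nonneg dest: order_trans)

end

section \<open>Tense Pavelka algebras\<close>

locale tense = pavelka A ad ng c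
  for A :: "'a set" and ad ng c +
  fixes G H :: "'a \<Rightarrow> 'a"
  assumes tense: "tense_pavelka A ad ng c G H"
begin

lemma G_in [simp]: "x \<in> A \<Longrightarrow> G x \<in> A" using tense by (simp add: tense_pavelka_def)
lemma H_in [simp]: "x \<in> A \<Longrightarrow> H x \<in> A" using tense by (simp add: tense_pavelka_def)
lemma G_meet: "x \<in> A \<Longrightarrow> y \<in> A \<Longrightarrow> G (meet x y) = meet (G x) (G y)"
  using tense by (simp add: tense_pavelka_def)
lemma G_imp_c: "0 \<le> r \<Longrightarrow> r \<le> 1 \<Longrightarrow> x \<in> A \<Longrightarrow> G (imp (c r) x) = imp (c r) (G x)"
  using tense by (simp add: tense_pavelka_def)
lemma ng_G_ng_H_le: "x \<in> A \<Longrightarrow> le (ng (G (ng (H x)))) x"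
  using tense by (simp add: tense_pavelka_def)
lemma ng_H_ng_G_le: "x \<in> A \<Longrightarrow> le (ng (H (ng (G x)))) x"
  using tense by (simp add: tense_pavelka_def)

lemma G_mono: "x \<in> A \<Longrightarrow> y \<in> A \<Longrightarrow> le x y \<Longrightarrow> le (G x) (G y)"
  using G_meet[of x y] meet_absorb1[of x y] meet_lower2[of "G x" "G y"] by simp
lemma G_one: "G one = one"
  using G_imp_c[of 0 one] by simp

lemma rel_le_rel_swap:
  assumes F: "F \<in> SpecM" and F': "F' \<in> SpecM"
  shows "rel G F F' \<le> rel H F' F"
proof (rule rel_greatest[OF F' F])
  fix b assume b: "b \<in> A"
  have "rel G F F' \<le> luk_imp (cut_val F' (G (ng (H b)))) (cut_val F (ng (H b)))"
    using rel_le F F' b by simp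
  also have "\<dots> \<le> luk_imp (cut_val F (H b)) (cut_val F' b)"
    using cut_val_mono[OF F' _ b ng_G_ng_H_le[OF b]] F F' b by (simp add: cut_val_ng luk_imp_def)
  finally show "rel G F F' \<le> luk_imp (cut_val F (H b)) (cut_val F' b)" .
qed

end

lemma tense_swap: "tense A ad ng c G H \<Longrightarrow> tense A ad ng c H G"
  unfolding tense_def tense_axioms_def tense_pavelka_def by blast

context tense
begin

lemma rel_swap: "F \<in> SpecM \<Longrightarrow> F' \<in> SpecM \<Longrightarrow> rel G F F' = rel H F' F"
  using rel_le_rel_swap tense.rel_le_rel_swap[OF tense_swap[OF tense_axioms]] by (meson antisym)

abbreviation boolean_rel :: "('a \<Rightarrow> 'a) \<Rightarrow> bool" where
  "boolean_rel K \<equiv> \<forall>F\<in>SpecM. \<forall>F'\<in>SpecM. rel K F F' \<in> {0, 1}"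

lemma boolean_rel_swap: "boolean_rel G \<longleftrightarrow> boolean_rel H"
  using rel_swap by auto

lemma boolean_rel_if_mul_le:
  assumes mul_le: "\<forall>x\<in>A. \<forall>y\<in>A. le (mul (G x) (G y)) (G (mul x y))"
  shows "boolean_rel G"
proof (intro ballI)
  fix F F' assume F: "F \<in> SpecM" and F': "F' \<in> SpecM"
  define t where "t = rel G F F'"
  show "t \<in> {0, 1}"
  proof (rule ccontr)
    assume "t \<notin> {0, 1}"
    then have t: "0 < t" "t < 1" using rel_bounds[OF F F'] by (auto simp: t_def less_le)
    define e where "e = (1 - t) / 8"
    have e: "0 < e" "8 * e = 1 - t" using t by (simp_all add: e_def)
    obtain a where a: "a \<in> A" "luk_imp (cut_val F' (G a)) (cut_val F a) < t + e"
      using rel_less_iff[OF F F', of G "t + e"] e by (auto simp: t_def)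
    define u where "u = cut_val F' (G a)"
    define w where "w = cut_val F a"
    have "t + e < 1" using t e by linarith
    then have uw: "1 - u + w < t + e"
      using a(2) by (auto simp: luk_imp_def u_def w_def min_def split: if_splits)
    obtain r where r: "0 \<le> r" "r \<le> 1" "of_rat r \<le> u" "u - e < of_rat r"
      using rat_approx_below[OF _ _ e(1), of u] cut_val_nonneg[OF F'] cut_val_le_one[OF F'] by (auto simp: u_def)
    txt \<open>\<open>x = c r \<rightarrow> a\<close> has \<open>G x\<close> in \<open>F'\<close>, so the hypothesis puts \<open>G (x \<cdot> x)\<close> in \<open>F'\<close> and forces
      \<open>x \<cdot> x\<close> to be large at \<open>F\<close>, although \<open>x\<close> itself is only about \<open>t\<close> there.\<close>
    define x where "x = imp (c r) a"
    have x: "x \<in> A" using a r by (simp add: x_def)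
    have "cut_val F' (G x) = 1"
      using G_imp_c[OF r(1,2) a(1)] F' a r by (simp add: x_def cut_val_imp cut_val_c u_def[symmetric])
    then have "cut_val F' (mul (G x) (G x)) = 1" using F' x by (simp add: cut_val_mul)
    moreover have "cut_val F' (mul (G x) (G x)) \<le> cut_val F' (G (mul x x))"
      using cut_val_mono[OF F'] mul_le x by simp
    ultimately have "cut_val F' (G (mul x x)) = 1" using cut_val_le_one[OF F', of "G (mul x x)"] by simp
    then have "t \<le> cut_val F (mul x x)" using rel_le[OF F F' mul_in[OF x x], of G] by (simp add: t_def luk_imp_def)
    also have "\<dots> = max (2 * cut_val F x - 1) 0" using F x by (simp add: cut_val_mul)
    also have "cut_val F x \<le> 1 - of_rat r + w" using F a r by (simp add: x_def cut_val_imp cut_val_c w_def)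
    then have "max (2 * cut_val F x - 1) 0 \<le> max (2 * (1 - of_rat r + w) - 1) 0" by simp
    finally show False using uw r t e by (simp add: max_def split: if_splits)
  qed
qed

lemma rel_ge_if_imp_c_in:
  assumes F: "F \<in> SpecM" and F': "F' \<in> SpecM" and r: "0 \<le> r" "r \<le> 1"
    and imp_in_F: "\<And>a. a \<in> A \<Longrightarrow> G a \<in> F' \<Longrightarrow> imp (c r) a \<in> F"
  shows "of_rat r \<le> rel G F F'"
proof (rule rel_greatest[OF F F'])
  fix a assume a: "a \<in> A"
  define u where "u = cut_val F' (G a)"
  define w where "w = cut_val F a"
  show "of_rat r \<le> luk_imp (cut_val F' (G a)) (cut_val F a)"
  proof (rule ccontr)
    assume "\<not> ?thesis"
    moreover have "(of_rat r :: real) \<le> 1" using r by simp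
    ultimately have "1 - u + w < of_rat r" by (auto simp: luk_imp_def u_def w_def min_def split: if_splits)
    then obtain s where s: "0 \<le> s" "s \<le> 1" "1 - of_rat r + w < of_rat s" "of_rat s < u"
      using rat_between_unit[of "1 - of_rat r + w" u] cut_val_nonneg[OF F] cut_val_le_one[OF F']
        r by (force simp: u_def w_def)
    have "imp (c s) (G a) \<in> F'" using imp_c_in_SpecM_iff[OF F' _ s(1,2), of "G a"] a s by (simp add: u_def)
    then have "imp (c r) (imp (c s) a) \<in> F" using imp_in_F a s G_imp_c by simp
    then have "cut_val F (imp (c r) (imp (c s) a)) = 1" using mem_SpecM_iff_cut_val[OF F] a r s by simp
    then show False using F a r s by (simp add: cut_val_imp cut_val_c w_def[symmetric] min_def split: if_splits)
  qed
qed

lemma G_filter_dichotomy: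
  assumes F': "F' \<in> SpecM" and b: "b \<in> A" and r: "0 \<le> r" "r \<le> 1" and s: "0 \<le> s" "s \<le> 1"
  shows "(\<exists>a\<in>A. G a \<in> F' \<and> (\<forall>F\<in>SpecM. mul (imp (c r) a) (imp b (c s)) \<notin> F))
       \<or> (\<exists>F\<in>SpecM. of_rat r \<le> rel G F F' \<and> cut_val F b \<le> of_rat s)"
proof -
  let ?W = "\<lambda>a. mul (imp (c r) a) (imp b (c s))"
  define Phi where "Phi = {a\<in>A. G a \<in> F'}"
  have fF': "mvfilter F'" using F' SpecM_mvfilter by blast
  have one: "one \<in> Phi" using G_one mvfilter_one[OF fF'] by (simp add: Phi_def)
  have W_mono: "le (?W a') (?W a)" if "a \<in> A" "a' \<in> A" "le a' a" for a a'
    using that b r s by (simp add: imp_mono_right mul_mono_left)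
  have "(\<exists>F\<in>SpecM. ?W ` Phi \<subseteq> F) \<or> (\<exists>w\<in>?W ` Phi. \<exists>n. mpow w n = c 0)"
  proof (rule directed_in_SpecM_or_nilpotent)
    show "?W ` Phi \<subseteq> A" using b r s by (auto simp: Phi_def)
    show "?W ` Phi \<noteq> {}" using one by blast
    fix w w' assume "w \<in> ?W ` Phi" "w' \<in> ?W ` Phi"
    then obtain a a' where "a \<in> Phi" "a' \<in> Phi" "w = ?W a" "w' = ?W a'" by blast
    moreover have "meet a a' \<in> Phi"
      using \<open>a \<in> Phi\<close> \<open>a' \<in> Phi\<close> G_meet mvfilter_meet[OF fF'] by (simp add: Phi_def)
    moreover have "a \<in> A" "a' \<in> A" using \<open>a \<in> Phi\<close> \<open>a' \<in> Phi\<close> by (auto simp: Phi_def)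
    ultimately show "\<exists>t\<in>?W ` Phi. le t w \<and> le t w'"
      using W_mono[of a "meet a a'"] W_mono[of a' "meet a a'"] meet_lower1 meet_lower2 by auto
  qed
  then show ?thesis
  proof
    assume "\<exists>F\<in>SpecM. ?W ` Phi \<subseteq> F"
    then obtain F where F: "F \<in> SpecM" "?W ` Phi \<subseteq> F" by blast
    have fF: "mvfilter F" using F SpecM_mvfilter by blast
    have "imp (c r) a \<in> F" if "a \<in> A" "G a \<in> F'" for a
      using F that mvfilter_up[OF fF _ mul_lower1] b r s by (force simp: Phi_def)
    then have "of_rat r \<le> rel G F F'" using rel_ge_if_imp_c_in[OF F(1) F' r] by blast
    moreover have "?W one \<in> F" using F(2) one by blast
    then have "imp b (c s) \<in> F" using b r s by (simp add: imp_def')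
    then have "cut_val F b \<le> of_rat s" using cut_val_le_if_imp_c[OF F(1) b s] by simp
    ultimately show ?thesis using F by blast
  next
    assume "\<exists>w\<in>?W ` Phi. \<exists>n. mpow w n = c 0"
    then obtain a n where a: "a \<in> Phi" "mpow (?W a) n = c 0" by blast
    have "?W a \<notin> F" if "F \<in> SpecM" for F
      using a mvfilter_mpow[OF SpecM_mvfilter[OF that]] z_notin_SpecM[OF that] by metis
    then show ?thesis using a by (auto simp: Phi_def)
  qed
qed

lemma cut_val_G_le_if_rel_one:
  "F \<in> SpecM \<Longrightarrow> F' \<in> SpecM \<Longrightarrow> a \<in> A \<Longrightarrow> rel G F F' = 1 \<Longrightarrow> cut_val F' (G a) \<le> cut_val F a"
  using rel_le[of F F' a G] by (simp add: luk_imp_def min_def split: if_splits)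

lemma G_value_ge_if_mul_c_le:
  assumes F': "F' \<in> SpecM" and a: "a \<in> A" "G a \<in> F'" and b: "b \<in> A" and q: "0 \<le> q" "q \<le> 1"
    and le_b: "le (mul (c q) a) b"
  shows "of_rat q \<le> cut_val F' (G b)"
proof -
  have "le a (imp (c q) b)" using le_b a b q residuation[of a "c q" b] mul_commute[of a "c q"] by simp
  then have "le (G a) (imp (c q) (G b))" using G_mono[of a "imp (c q) b"] G_imp_c[OF q b] a b q by simp
  then have "imp (c q) (G b) \<in> F'" using mvfilter_up[OF SpecM_mvfilter[OF F'] a(2)] b q by simp
  then show ?thesis using imp_c_in_SpecM_iff[OF F' _ q] b by simp
qed

lemma G_grid_witness:
  fixes K :: nat and q :: rat
  assumes F': "F' \<in> SpecM" and b: "b \<in> A" and q: "0 \<le> q" "q \<le> 1"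
    and gt: "\<And>F. F \<in> SpecM \<Longrightarrow> of_rat q < luk_imp (rel G F F') (cut_val F b)"
  shows "\<exists>a\<in>A. G a \<in> F' \<and> (\<forall>i\<le>K. 0 \<le> of_nat i / of_nat K - 1 + q \<longrightarrow>
    (\<forall>F\<in>SpecM. mul (imp (c (of_nat i / of_nat K)) a) (imp b (c (of_nat i / of_nat K - 1 + q))) \<notin> F))"
proof -
  let ?r = "\<lambda>i::nat. of_nat i / of_nat K :: rat"
  let ?P = "\<lambda>i a. \<forall>F\<in>SpecM. mul (imp (c (?r i)) a) (imp b (c (?r i - 1 + q))) \<notin> F"
  define Phi where "Phi = {a\<in>A. G a \<in> F'}"
  define I where "I = {i. i \<le> K \<and> 0 \<le> ?r i - 1 + q}"
  have r: "0 \<le> ?r i" "?r i \<le> 1" if "i \<le> K" for i using that by (auto simp: divide_le_eq_1)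
  have "\<exists>a\<in>Phi. \<forall>i\<in>I. ?P i a"
  proof (rule meet_closed_common_witness)
    show "finite I" by (rule finite_subset[of _ "{..K}"]) (auto simp: I_def)
    show "Phi \<subseteq> A" "one \<in> Phi" using G_one mvfilter_one[OF SpecM_mvfilter[OF F']] by (auto simp: Phi_def)
    show "meet a a' \<in> Phi" if "a \<in> Phi" "a' \<in> Phi" for a a'
      using that G_meet mvfilter_meet[OF SpecM_mvfilter[OF F']] by (simp add: Phi_def)
    show "?P i a'" if i: "i \<in> I" and a: "a \<in> Phi" "a' \<in> Phi" "le a' a" "?P i a" for i a a'
    proof -
      let ?W = "\<lambda>a. mul (imp (c (?r i)) a) (imp b (c (?r i - 1 + q)))"
      have iK: "i \<le> K" "0 \<le> ?r i - 1 + q" using i by (simp_all add: I_def)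
      have bounds: "0 \<le> ?r i" "?r i \<le> 1" "0 \<le> ?r i - 1 + q" "?r i - 1 + q \<le> 1"
        using r[OF iK(1)] iK(2) q by linarith+
      moreover have "a \<in> A" "a' \<in> A" using a by (auto simp: Phi_def)
      ultimately have "le (?W a') (?W a)" using a(3) b by (simp add: imp_mono_right mul_mono_left)
      then show ?thesis using notin_SpecM_if_le[OF _ _ a(4)] bounds b \<open>a \<in> A\<close> by simp
    qed
    show "\<forall>i\<in>I. \<exists>a\<in>Phi. ?P i a"
    proof
      fix i assume i: "i \<in> I"
      have "\<not> (of_rat (?r i) \<le> rel G F F' \<and> cut_val F b \<le> of_rat (?r i - 1 + q))" if F: "F \<in> SpecM" for F
        using gt[OF F] by (auto simp: luk_imp_def of_rat_add of_rat_diff)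
      then show "\<exists>a\<in>Phi. ?P i a"
        using G_filter_dichotomy[OF F' b, of "?r i" "?r i - 1 + q"] i r q by (auto simp: I_def Phi_def)
    qed
  qed
  then show ?thesis by (auto simp: Phi_def I_def)
qed

end

locale semisimple_tense = tense +
  assumes semisimple: "mv_semisimple A ad ng (c 0)"

lemma semisimple_tense_swap: "semisimple_tense A ad ng c G H \<Longrightarrow> semisimple_tense A ad ng c H G"
  unfolding semisimple_tense_def semisimple_tense_axioms_def using tense_swap by blast

context semisimple_tense
begin

text \<open>With \<open>rel_le\<close> this says that \<open>G b/F'\<close> is the infimum of
  \<open>R(F,F') \<rightarrow> b/F\<close> over all maximal filters \<open>F\<close>. Otherwise the dichotomy, applied on a finite grid,
  yields one \<open>a\<close> with \<open>G a \<in> F'\<close> and \<open>c q \<cdot> a \<le> b\<close> for some rational \<open>q > G b/F'\<close>.\<close>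

lemma G_value_approx:
  assumes F': "F' \<in> SpecM" and b: "b \<in> A" and lt: "cut_val F' (G b) < q"
  shows "\<exists>F\<in>SpecM. luk_imp (rel G F F') (cut_val F b) < q"
proof (rule ccontr)
  assume "\<not> ?thesis"
  then have ge: "\<And>F. F \<in> SpecM \<Longrightarrow> q \<le> luk_imp (rel G F F') (cut_val F b)" by (auto simp: not_less)
  define u where "u = cut_val F' (G b)"
  have u: "0 \<le> u" "u < q" "q \<le> 1"
    using cut_val_nonneg[OF F'] lt order_trans[OF ge[OF F'] luk_imp_le_one] by (auto simp: u_def)
  obtain q' where q': "0 \<le> q'" "q' \<le> 1" "u < of_rat q'" "of_rat q' < q"
    using rat_between_unit[of u q] u by blast
  obtain K :: nat where "0 < K" "inverse (real K) < of_rat q' - u"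
    using ex_inverse_of_nat_less[of "of_rat q' - u"] q'(3) by auto
  then have K: "0 < K" "u < of_rat q' - 1 / real K" by (simp_all add: inverse_eq_divide)
  then have "of_rat (1 / of_nat K) \<le> (of_rat q' :: real)" using u by (simp add: of_rat_divide)
  then have q'K: "1 / of_nat K \<le> q'" by (simp only: of_rat_less_eq)
  obtain a where a: "a \<in> A" "G a \<in> F'" and grid: "\<forall>i\<le>K. 0 \<le> of_nat i / of_nat K - 1 + q' \<longrightarrow>
    (\<forall>F\<in>SpecM. mul (imp (c (of_nat i / of_nat K)) a) (imp b (c (of_nat i / of_nat K - 1 + q'))) \<notin> F)"
    using G_grid_witness[OF F' b q'(1,2), of K] ge q'(4) by fastforce
  have "cut_val F (mul (c (q' - 1 / of_nat K)) a) \<le> cut_val F b" if "F \<in> SpecM" for F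
    using cut_val_mul_c_le_if_grid[OF that a(1) b K(1) q'K q'(2)] grid that by blast
  moreover have "(0::rat) \<le> 1 / of_nat K" by simp
  then have q'': "0 \<le> q' - 1 / of_nat K" "q' - 1 / of_nat K \<le> 1" using q'K q'(2) by linarith+
  ultimately have "le (mul (c (q' - 1 / of_nat K)) a) b"
    using le_if_cut_val_le[OF semisimple] a b by simp
  then have "of_rat (q' - 1 / of_nat K) \<le> u"
    using G_value_ge_if_mul_c_le[OF F' a b q''] by (simp add: u_def)
  then show False using K by (simp add: of_rat_diff of_rat_divide)
qed

lemma G_value_ge_if_successors_ge:
  assumes bool: "boolean_rel G" and F': "F' \<in> SpecM" and a: "a \<in> A" and q: "q \<le> 1"
    and ge: "\<And>F. F \<in> SpecM \<Longrightarrow> rel G F F' = 1 \<Longrightarrow> q \<le> cut_val F a"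
  shows "q \<le> cut_val F' (G a)"
proof (rule ccontr)
  assume "\<not> ?thesis"
  then obtain F where F: "F \<in> SpecM" "luk_imp (rel G F F') (cut_val F a) < q"
    using G_value_approx[OF F' a] by (auto simp: not_le)
  then have "rel G F F' \<noteq> 0" using q cut_val_nonneg[OF F(1)] by (auto simp: luk_imp_def)
  then have "rel G F F' = 1" using bool F F' by auto
  then show False using F ge[OF F(1)] cut_val_le_one[OF F(1)] by (simp add: luk_imp_def)
qed

lemma boolean_rel_mul_le:
  assumes bool: "boolean_rel G" and x: "x \<in> A" and y: "y \<in> A"
  shows "le (mul (G x) (G y)) (G (mul x y))"
proof (rule le_if_cut_val_le[OF semisimple])
  fix F' assume F': "F' \<in> SpecM"
  show "cut_val F' (mul (G x) (G y)) \<le> cut_val F' (G (mul x y))"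
  proof (rule G_value_ge_if_successors_ge[OF bool F' mul_in[OF x y]])
    show "cut_val F' (mul (G x) (G y)) \<le> 1" using cut_val_le_one[OF F'] .
    fix F assume F: "F \<in> SpecM" "rel G F F' = 1"
    have "cut_val F' (G x) \<le> cut_val F x" "cut_val F' (G y) \<le> cut_val F y"
      using cut_val_G_le_if_rel_one[OF F(1) F' _ F(2)] x y by auto
    then show "cut_val F' (mul (G x) (G y)) \<le> cut_val F (mul x y)"
      using F F' x y by (simp add: cut_val_mul)
  qed
qed (use x y in simp_all)

lemma boolean_rel_ad_le:
  assumes bool: "boolean_rel G" and x: "x \<in> A" and y: "y \<in> A"
  shows "le (ad (G x) (G y)) (G (ad x y))"
proof (rule le_if_cut_val_le[OF semisimple])
  fix F' assume F': "F' \<in> SpecM"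
  show "cut_val F' (ad (G x) (G y)) \<le> cut_val F' (G (ad x y))"
  proof (rule G_value_ge_if_successors_ge[OF bool F' ad_in[OF x y]])
    show "cut_val F' (ad (G x) (G y)) \<le> 1" using cut_val_le_one[OF F'] .
    fix F assume F: "F \<in> SpecM" "rel G F F' = 1"
    have "cut_val F' (G x) \<le> cut_val F x" "cut_val F' (G y) \<le> cut_val F y"
      using cut_val_G_le_if_rel_one[OF F(1) F' _ F(2)] x y by auto
    then show "cut_val F' (ad (G x) (G y)) \<le> cut_val F (ad x y)"
      using F F' x y by (simp add: cut_val_ad)
  qed
qed (use x y in simp_all)

lemma boolean_rel_mul_self:
  assumes bool: "boolean_rel G" and x: "x \<in> A"
  shows "mul (G x) (G x) = G (mul x x)"
proof (rule le_antisym)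
  show "le (G (mul x x)) (mul (G x) (G x))"
  proof (rule le_if_cut_val_le[OF semisimple])
    fix F' assume F': "F' \<in> SpecM"
    define g where "g = cut_val F' (G (mul x x))"
    have g: "0 \<le> g" "g \<le> 1" using cut_val_nonneg[OF F'] cut_val_le_one[OF F'] by (auto simp: g_def)
    txt \<open>Every successor \<open>F\<close> of \<open>F'\<close> has \<open>g \<le> (x \<cdot> x)/F\<close>, hence \<open>(1 + g)/2 \<le> x/F\<close> once \<open>g > 0\<close>.\<close>
    have "g \<le> max (2 * cut_val F' (G x) - 1) 0"
    proof (cases "g = 0")
      case False
      have "(1 + g) / 2 \<le> cut_val F' (G x)"
      proof (rule G_value_ge_if_successors_ge[OF bool F' x])
        fix F assume "F \<in> SpecM" "rel G F F' = 1"
        then show "(1 + g) / 2 \<le> cut_val F x"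
          using cut_val_G_le_if_rel_one[OF _ F' _, of F "mul x x"] False g x
          by (simp add: g_def cut_val_mul max_def split: if_splits)
      qed (use g in simp)
      then show ?thesis by simp
    qed simp
    then show "cut_val F' (G (mul x x)) \<le> cut_val F' (mul (G x) (G x))"
      using F' x by (simp add: g_def cut_val_mul)
  qed (use x in simp_all)
qed (use boolean_rel_mul_le[OF bool x x] x in simp_all)

lemma boolean_rel_ad_self:
  assumes bool: "boolean_rel G" and x: "x \<in> A"
  shows "ad (G x) (G x) = G (ad x x)"
proof (rule le_antisym)
  show "le (G (ad x x)) (ad (G x) (G x))"
  proof (rule le_if_cut_val_le[OF semisimple])
    fix F' assume F': "F' \<in> SpecM"
    define g where "g = cut_val F' (G (ad x x))"
    have g: "0 \<le> g" "g \<le> 1" using cut_val_nonneg[OF F'] cut_val_le_one[OF F'] by (auto simp: g_def)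
    have "g / 2 \<le> cut_val F' (G x)"
    proof (rule G_value_ge_if_successors_ge[OF bool F' x])
      fix F assume "F \<in> SpecM" "rel G F F' = 1"
      then show "g / 2 \<le> cut_val F x"
        using cut_val_G_le_if_rel_one[OF _ F' _, of F "ad x x"] g x
        by (simp add: g_def cut_val_ad min_def split: if_splits)
    qed (use g in simp)
    then show "cut_val F' (G (ad x x)) \<le> cut_val F' (ad (G x) (G x))"
      using F' x g by (simp add: g_def cut_val_ad)
  qed (use x in simp_all)
qed (use boolean_rel_ad_le[OF bool x x] x in simp_all)

lemma mul_le_iff_boolean_rel:
  "(\<forall>x\<in>A. \<forall>y\<in>A. le (mul (G x) (G y)) (G (mul x y))) \<longleftrightarrow> boolean_rel G"
  using boolean_rel_if_mul_le boolean_rel_mul_le by blast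

lemma tense_mv_axioms_if_boolean_rel:
  assumes "boolean_rel G"
  shows "G one = one \<and>
    (\<forall>x\<in>A. \<forall>y\<in>A. le (mul (G x) (G y)) (G (mul x y)) \<and> le (ad (G x) (G y)) (G (ad x y))) \<and>
    (\<forall>x\<in>A. mul (G x) (G x) = G (mul x x) \<and> ad (G x) (G x) = G (ad x x))"
  using assms G_one boolean_rel_mul_le boolean_rel_ad_le boolean_rel_mul_self boolean_rel_ad_self
  by blast

end

theorem theorem12:
  fixes A :: "'a set" and ad :: "'a \<Rightarrow> 'a \<Rightarrow> 'a" and ng :: "'a \<Rightarrow> 'a"
    and c :: "rat \<Rightarrow> 'a" and G H :: "'a \<Rightarrow> 'a"
  assumes tense: "tense_pavelka A ad ng c G H"
    and ss: "mv_semisimple A ad ng (c 0)"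
  defines "mul \<equiv> mv_mult ad ng" and "le \<equiv> mv_le ad ng (c 0)" and "one \<equiv> mv_one ng (c 0)"
  shows "let
      i = (\<forall>x\<in>A. \<forall>y\<in>A. le (mul (G x) (G y)) (G (mul x y)));
      ii = (\<forall>x\<in>A. \<forall>y\<in>A. le (mul (H x) (H y)) (H (mul x y)));
      iii = (\<forall>F\<in>max_filters A ad ng (c 0). \<forall>F'\<in>max_filters A ad ng (c 0).
               time_rel A ad ng (c 0) G F F' \<in> {0, 1});
      iv = (G one = one \<and> H one = one \<and>
            (\<forall>x\<in>A. \<forall>y\<in>A.
               le (mul (G x) (G y)) (G (mul x y)) \<and> le (mul (H x) (H y)) (H (mul x y)) \<and>
               le (ad (G x) (G y)) (G (ad x y)) \<and> le (ad (H x) (H y)) (H (ad x y))) \<and>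
            (\<forall>x\<in>A.
               mul (G x) (G x) = G (mul x x) \<and> mul (H x) (H x) = H (mul x x) \<and>
               ad (G x) (G x) = G (ad x x) \<and> ad (H x) (H x) = H (ad x x) \<and>
               le (ng (G (ng (H x)))) x \<and> le (ng (H (ng (G x)))) x))
    in (i \<longleftrightarrow> ii) \<and> (i \<longleftrightarrow> iii) \<and> (i \<longleftrightarrow> iv)"
proof -
  interpret GH: semisimple_tense A ad ng c G H
    using tense ss by unfold_locales (simp_all add: tense_pavelka_def)
  interpret HG: semisimple_tense A ad ng c H G
    by (rule semisimple_tense_swap[OF GH.semisimple_tense_axioms])
  show ?thesis
    unfolding Let_def mul_def le_def one_def mv_one_def
      GH.mul_le_iff_boolean_rel HG.mul_le_iff_boolean_rel GH.boolean_rel_swap[symmetric]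
    using GH.tense_mv_axioms_if_boolean_rel HG.tense_mv_axioms_if_boolean_rel GH.boolean_rel_swap
      GH.ng_G_ng_H_le GH.ng_H_ng_G_le GH.boolean_rel_if_mul_le
    by (intro conjI iffI) blast+
qed

end
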